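(* Let $\sigma : \mathcal{S} \to \mathcal{A}$ be a $\sim$-strategy; then so is $\tilde{\sigma} : \tilde{\mathcal{S}} \to \tilde{\mathcal{A}}$.
   Context: $e \rightarrow e'$ denotes immediate causal dependency in an event structure ($e<e'$ with nothing strictly between). An essp $\mathcal{A}$ is an event structure with polarities $A$ with a symmetry $\tilde A$ and open, jointly monic maps $l_A,r_A:\tilde A\to A$ forming an equivalence relation; configurations of $\tilde A$ correspond to bijections $\theta:x\cong y$ of the isomorphism family $\mathbb{S}_A$. $\tilde{\mathcal{A}}$ denotes $\tilde A$ equipped with its canonical higher symmetry, whose isomorphism family consists of bijections between $\theta,\theta'\in\mathbb{S}_A$ corresponding to commuting squares of isomorphisms in $\mathbb{S}_A$. For a map $\sigma$ of essps, $\tilde\sigma:\tilde A\to\tilde B$ is the induced map on symmetries, $\theta\mapsto\sigma\theta$. A $\sim$-strategy $\sigma:\mathcal{S}\to\mathcal{A}$ is a map of essps which is courteous (if $s_1 \rightarrow s_2$ with $\mathrm{pol}(s_1)=+$ or $\mathrm{pol}(s_2)=-$ then $\sigma s_1 \rightarrow \sigma s_2$), strong-receptive (if $\theta\in\mathbb{S}_S$ and $\sigma\theta$ extends in $\mathbb{S}_A$ by a pair $(a_1,a_2)$ of negative events, there is a unique extension $\theta\cup\{(s_1,s_2)\}\in\mathbb{S}_S$ with $\sigma s_i=a_i$), and thin ($\mathcal{S}$ is thin: whenever $\theta\in\mathbb{S}_S$ has two extensions in $\mathbb{S}_S$ by positive events only whose domains are compatible, their union is in $\mathbb{S}_S$).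 *)

theory Defs
  imports Main
begin

text \<open>An essp is an event structure with polarity together with its symmetry,
  presented by the isomorphism family S_A of bijections between configurations.
  Polarity: True = positive, False = negative.  Bijections are represented by
  their graphs (sets of pairs).\<close>

record 'a essp =
  es_ev  :: "'a set"
  es_le  :: "'a \<Rightarrow> 'a \<Rightarrow> bool"
  es_con :: "'a set set"
  es_pol :: "'a \<Rightarrow> bool"
  es_sym :: "('a \<times> 'a) set set"

definition is_es :: "('a, 'z) essp_scheme \<Rightarrow> bool" where
  "is_es E \<longleftrightarrow>
     (\<forall>a b. es_le E a b \<longrightarrow> a \<in> es_ev E \<and> b \<in> es_ev E) \<and>
     (\<forall>a\<in>es_ev E. es_le E a a) \<and>
     (\<forall>a b. es_le E a b \<and> es_le E b a \<longrightarrow> a = b) \<and>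
     (\<forall>a b c. es_le E a b \<and> es_le E b c \<longrightarrow> es_le E a c) \<and>
     (\<forall>a\<in>es_ev E. finite {b. es_le E b a}) \<and>
     (\<forall>X\<in>es_con E. finite X \<and> X \<subseteq> es_ev E) \<and>
     (\<forall>a\<in>es_ev E. {a} \<in> es_con E) \<and>
     (\<forall>X Y. X \<in> es_con E \<and> Y \<subseteq> X \<longrightarrow> Y \<in> es_con E) \<and>
     (\<forall>X a b. X \<in> es_con E \<and> a \<in> X \<and> es_le E b a \<longrightarrow> insert b X \<in> es_con E)"

definition conf :: "('a, 'z) essp_scheme \<Rightarrow> 'a set \<Rightarrow> bool" where
  "conf E x \<longleftrightarrow> x \<subseteq> es_ev E \<and> finite x \<and> x \<in> es_con E \<and>
     (\<forall>a\<in>x. \<forall>b. es_le E b a \<longrightarrow> b \<in> x)"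

definition es_lt :: "('a, 'z) essp_scheme \<Rightarrow> 'a \<Rightarrow> 'a \<Rightarrow> bool" where
  "es_lt E a b \<longleftrightarrow> es_le E a b \<and> a \<noteq> b"

definition imm :: "('a, 'z) essp_scheme \<Rightarrow> 'a \<Rightarrow> 'a \<Rightarrow> bool" where
  "imm E a b \<longleftrightarrow> es_lt E a b \<and> \<not> (\<exists>c. es_lt E a c \<and> es_lt E c b)"

definition bij_rel :: "('a \<times> 'b) set \<Rightarrow> 'a set \<Rightarrow> 'b set \<Rightarrow> bool" where
  "bij_rel \<theta> x y \<longleftrightarrow> \<theta> \<subseteq> x \<times> y \<and> (\<forall>a\<in>x. \<exists>!b. (a, b) \<in> \<theta>) \<and> (\<forall>b\<in>y. \<exists>!a. (a, b) \<in> \<theta>)"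

definition iso_family :: "('a, 'z) essp_scheme \<Rightarrow> bool" where
  "iso_family E \<longleftrightarrow>
     (\<forall>\<theta>\<in>es_sym E. \<exists>x y. conf E x \<and> conf E y \<and> bij_rel \<theta> x y) \<and>
     (\<forall>x. conf E x \<longrightarrow> Id_on x \<in> es_sym E) \<and>
     (\<forall>\<theta>\<in>es_sym E. \<theta>\<inverse> \<in> es_sym E) \<and>
     (\<forall>\<theta>\<in>es_sym E. \<forall>\<phi>\<in>es_sym E. Range \<theta> = Domain \<phi> \<longrightarrow> \<theta> O \<phi> \<in> es_sym E) \<and>
     (\<forall>\<theta>\<in>es_sym E. \<forall>x'. conf E x' \<and> x' \<subseteq> Domain \<theta> \<longrightarrow> \<theta> \<inter> (x' \<times> UNIV) \<in> es_sym E) \<and>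
     (\<forall>\<theta>\<in>es_sym E. \<forall>x'. conf E x' \<and> Domain \<theta> \<subseteq> x' \<longrightarrow>
         (\<exists>\<theta>'\<in>es_sym E. \<theta> \<subseteq> \<theta>' \<and> Domain \<theta>' = x'))"

definition is_essp :: "('a, 'z) essp_scheme \<Rightarrow> bool" where
  "is_essp E \<longleftrightarrow> is_es E \<and> iso_family E \<and>
     (\<forall>\<theta>\<in>es_sym E. \<forall>(a, b)\<in>\<theta>. es_pol E a = es_pol E b)"

definition es_map :: "('a, 'z) essp_scheme \<Rightarrow> ('b, 'w) essp_scheme \<Rightarrow> ('a \<Rightarrow> 'b) \<Rightarrow> bool" where
  "es_map S A f \<longleftrightarrow> f ` es_ev S \<subseteq> es_ev A \<and>
     (\<forall>s\<in>es_ev S. es_pol A (f s) = es_pol S s) \<and>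
     (\<forall>x. conf S x \<longrightarrow> conf A (f ` x) \<and> inj_on f x)"

definition act :: "('a \<Rightarrow> 'b) \<Rightarrow> ('a \<times> 'a) set \<Rightarrow> ('b \<times> 'b) set" where
  "act f \<theta> = map_prod f f ` \<theta>"

definition essp_map :: "('a, 'z) essp_scheme \<Rightarrow> ('b, 'w) essp_scheme \<Rightarrow> ('a \<Rightarrow> 'b) \<Rightarrow> bool" where
  "essp_map S A f \<longleftrightarrow> is_essp S \<and> is_essp A \<and> es_map S A f \<and>
     (\<forall>\<theta>\<in>es_sym S. act f \<theta> \<in> es_sym A)"

definition courteous :: "('a, 'z) essp_scheme \<Rightarrow> ('b, 'w) essp_scheme \<Rightarrow> ('a \<Rightarrow> 'b) \<Rightarrow> bool" where
  "courteous S A \<sigma> \<longleftrightarrow>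
     (\<forall>s1 s2. imm S s1 s2 \<and> (es_pol S s1 \<or> \<not> es_pol S s2) \<longrightarrow> imm A (\<sigma> s1) (\<sigma> s2))"

definition strong_receptive :: "('a, 'z) essp_scheme \<Rightarrow> ('b, 'w) essp_scheme \<Rightarrow> ('a \<Rightarrow> 'b) \<Rightarrow> bool" where
  "strong_receptive S A \<sigma> \<longleftrightarrow>
     (\<forall>\<theta>\<in>es_sym S. \<forall>a1 a2.
        (a1, a2) \<notin> act \<sigma> \<theta> \<and> insert (a1, a2) (act \<sigma> \<theta>) \<in> es_sym A \<and>
        \<not> es_pol A a1 \<and> \<not> es_pol A a2 \<longrightarrow>
        (\<exists>!p. insert p \<theta> \<in> es_sym S \<and> \<sigma> (fst p) = a1 \<and> \<sigma> (snd p) = a2))"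

definition thin :: "('a, 'z) essp_scheme \<Rightarrow> bool" where
  "thin S \<longleftrightarrow>
     (\<forall>\<theta> \<theta>1 \<theta>2. \<theta> \<in> es_sym S \<and> \<theta>1 \<in> es_sym S \<and> \<theta>2 \<in> es_sym S \<and> \<theta> \<subseteq> \<theta>1 \<and> \<theta> \<subseteq> \<theta>2 \<and>
        (\<forall>(s, s')\<in>\<theta>1 - \<theta>. es_pol S s \<and> es_pol S s') \<and>
        (\<forall>(s, s')\<in>\<theta>2 - \<theta>. es_pol S s \<and> es_pol S s') \<and>
        conf S (Domain \<theta>1 \<union> Domain \<theta>2) \<longrightarrow> \<theta>1 \<union> \<theta>2 \<in> es_sym S)"

definition tstrategy :: "('a, 'z) essp_scheme \<Rightarrow> ('b, 'w) essp_scheme \<Rightarrow> ('a \<Rightarrow> 'b) \<Rightarrow> bool" where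
  "tstrategy S A \<sigma> \<longleftrightarrow> essp_map S A \<sigma> \<and> courteous S A \<sigma> \<and> strong_receptive S A \<sigma> \<and> thin S"

text \<open>Events of \<tilde>A: prime bijections \<theta> : [a1] \<cong> [a2] in S_A, tagged with their top
  pair (a1,a2).  A configuration X of \<tilde>A corresponds to the bijection fst ` X.\<close>

definition tev :: "('a, 'z) essp_scheme \<Rightarrow> (('a \<times> 'a) \<times> ('a \<times> 'a) set) set" where
  "tev A = {((a1, a2), \<theta>). \<theta> \<in> es_sym A \<and> (a1, a2) \<in> \<theta> \<and> Domain \<theta> = {a. es_le A a a1}}"

definition tilde_base :: "'a essp \<Rightarrow> (('a \<times> 'a) \<times> ('a \<times> 'a) set) essp" where
  "tilde_base A = \<lparr> es_ev = tev A,
     es_le = (\<lambda>e e'. e \<in> tev A \<and> e' \<in> tev A \<and> snd e \<subseteq> snd e'),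
     es_con = {X. finite X \<and> X \<subseteq> tev A \<and> (\<exists>\<phi>\<in>es_sym A. \<Union> (snd ` X) \<subseteq> \<phi>)},
     es_pol = (\<lambda>e. es_pol A (fst (fst e))),
     es_sym = {} \<rparr>"

text \<open>Higher symmetry: bijections X \<cong> X' between configurations of \<tilde>A (i.e. between
  \<theta> = fst`X : x \<cong> y and \<theta>' = fst`X' : x' \<cong> y') induced by commuting squares
  \<phi> : x \<cong> x', \<psi> : y \<cong> y' in S_A with \<psi>\<theta> = \<theta>'\<phi>; the event with top (a,b) is sent to the
  event with top (\<phi> a, \<psi> b).\<close>
definition hsym :: "'a essp \<Rightarrow> ((('a \<times> 'a) \<times> ('a \<times> 'a) set) \<times> (('a \<times> 'a) \<times> ('a \<times> 'a) set)) set set" where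
  "hsym A = {\<Phi>. \<exists>X X' \<phi> \<psi>.
      conf (tilde_base A) X \<and> conf (tilde_base A) X' \<and> \<phi> \<in> es_sym A \<and> \<psi> \<in> es_sym A \<and>
      Domain \<phi> = Domain (fst ` X) \<and> Range \<phi> = Domain (fst ` X') \<and>
      Domain \<psi> = Range (fst ` X) \<and> Range \<psi> = Range (fst ` X') \<and>
      (\<forall>(a, b)\<in>fst ` X. \<forall>a' b'. (a, a') \<in> \<phi> \<and> (b, b') \<in> \<psi> \<longrightarrow> (a', b') \<in> fst ` X') \<and>
      \<Phi> = {(e, e'). e \<in> X \<and> e' \<in> X' \<and> (fst (fst e), fst (fst e')) \<in> \<phi> \<and>
                     (snd (fst e), snd (fst e')) \<in> \<psi>}}"

definition tilde :: "'a essp \<Rightarrow> (('a \<times> 'a) \<times> ('a \<times> 'a) set) essp" where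
  "tilde A = (tilde_base A)\<lparr> es_sym := hsym A \<rparr>"

text \<open>The induced map \<tilde>\<sigma> : \<tilde>S \<rightarrow> \<tilde>A (\<theta> \<mapsto> \<sigma>\<theta> on configurations): the prime event
  with top (s1,s2) and bijection \<theta> goes to the prime of \<sigma>\<theta> at (\<sigma> s1, \<sigma> s2), i.e. the
  restriction of \<sigma>\<theta> to [\<sigma> s1].\<close>
definition tmap :: "'b essp \<Rightarrow> ('a \<Rightarrow> 'b) \<Rightarrow> (('a \<times> 'a) \<times> ('a \<times> 'a) set) \<Rightarrow> (('b \<times> 'b) \<times> ('b \<times> 'b) set)" where
  "tmap A \<sigma> e = ((\<sigma> (fst (fst e)), \<sigma> (snd (fst e))),
                  {(a, b) \<in> act \<sigma> (snd e). es_le A a (\<sigma> (fst (fst e)))})"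

end

theory Submission
  imports Defs
begin

text \<open>
  Configurations of \<open>tilde A\<close> are the sets of primes of the bijections \<open>\<theta> \<in> S\<^sub>A\<close>, and every
  element of the higher symmetry is induced by a commuting square \<open>(\<theta>, \<phi>, \<psi>)\<close> of \<open>S\<^sub>A\<close>, whose
  fourth side is the conjugate \<open>\<phi>\<inverse> \<theta> \<psi>\<close>. Through these descriptions every property of
  \<open>tilde \<sigma>\<close> reduces to the same property of \<open>\<sigma>\<close>, acting on the sides of squares: \<open>\<sigma>\<close> maps squares
  to squares; immediate causality in \<open>tilde S\<close> is immediate causality of the top events; thinness
  of \<open>S\<close> applied to the three sides of two squares gives thinness of \<open>tilde S\<close>. For strong
  receptivity, a negative one-pair extension of \<open>tilde \<sigma> \<Theta>\<close> is a one-pair extension of the three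
  sides of a square of \<open>S\<^sub>A\<close>; strong receptivity of \<open>\<sigma>\<close> lifts each side uniquely, and the lifts
  share their new events because strong receptivity also applies to identity symmetries.
\<close>

section \<open>Configurations, symmetries and their prime parts\<close>

definition down :: "('a, 'z) essp_scheme \<Rightarrow> 'a \<Rightarrow> 'a set" where
  "down A a = {c. es_le A c a}"

definition prime_at :: "('a, 'z) essp_scheme \<Rightarrow> ('a \<times> 'a) set \<Rightarrow> 'a \<Rightarrow> ('a \<times> 'a) set" where
  "prime_at A \<theta> a = {p \<in> \<theta>. es_le A (fst p) a}"

lemma is_esD:
  assumes "is_es A"
  shows "\<forall>a b. es_le A a b \<longrightarrow> a \<in> es_ev A \<and> b \<in> es_ev A"
    and "\<forall>a\<in>es_ev A. es_le A a a"
    and "\<forall>a b. es_le A a b \<and> es_le A b a \<longrightarrow> a = b"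
    and "\<forall>a b c. es_le A a b \<and> es_le A b c \<longrightarrow> es_le A a c"
    and "\<forall>X Y. X \<in> es_con A \<and> Y \<subseteq> X \<longrightarrow> Y \<in> es_con A"
  using assms unfolding is_es_def by - (elim conjE, assumption)+

lemma es_le_ev: "is_es A \<Longrightarrow> es_le A a b \<Longrightarrow> a \<in> es_ev A \<and> b \<in> es_ev A"
  using is_esD(1) by blast

lemma es_refl: "is_es A \<Longrightarrow> a \<in> es_ev A \<Longrightarrow> es_le A a a"
  using is_esD(2) by blast

lemma es_antisym: "is_es A \<Longrightarrow> es_le A a b \<Longrightarrow> es_le A b a \<Longrightarrow> a = b"
  using is_esD(3) by blast

lemma es_trans: "is_es A \<Longrightarrow> es_le A a b \<Longrightarrow> es_le A b c \<Longrightarrow> es_le A a c"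
  using is_esD(4) by blast

lemma es_con_subset: "is_es A \<Longrightarrow> X \<in> es_con A \<Longrightarrow> Y \<subseteq> X \<Longrightarrow> Y \<in> es_con A"
  using is_esD(5) by blast

lemma conf_finite: "conf A x \<Longrightarrow> finite x"
  by (simp add: conf_def)

lemma conf_subset_ev: "conf A x \<Longrightarrow> x \<subseteq> es_ev A"
  by (simp add: conf_def)

lemma conf_down_closed: "conf A x \<Longrightarrow> a \<in> x \<Longrightarrow> es_le A c a \<Longrightarrow> c \<in> x"
  by (simp add: conf_def)

lemma conf_subset:
  assumes "is_es A" "conf A x" "y \<subseteq> x" "\<forall>a\<in>y. \<forall>b. es_le A b a \<longrightarrow> b \<in> y"
  shows "conf A y"
proof -
  have "y \<in> es_con A" using es_con_subset[OF assms(1)] assms(2,3) unfolding conf_def by blast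
  thus ?thesis using assms(2-4) finite_subset unfolding conf_def by blast
qed

lemma down_subset_conf: "conf A x \<Longrightarrow> a \<in> x \<Longrightarrow> down A a \<subseteq> x"
  unfolding down_def by (auto intro: conf_down_closed)

lemma conf_down:
  assumes "is_es A" "conf A x" "a \<in> x"
  shows "conf A (down A a)"
  using conf_subset[OF assms(1,2) down_subset_conf[OF assms(2,3)]] es_trans[OF assms(1)]
  unfolding down_def by blast

lemma down_self: "is_es A \<Longrightarrow> a \<in> es_ev A \<Longrightarrow> a \<in> down A a"
  unfolding down_def by (simp add: es_refl)

lemma es_le_if_down_subset:
  assumes "is_es A" "a \<in> es_ev A" "down A a \<subseteq> down A b"
  shows "es_le A a b"
  using down_self[OF assms(1,2)] assms(3) unfolding down_def by blast

lemma down_inj: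
  assumes "is_es A" "a \<in> es_ev A" "b \<in> es_ev A" "down A a = down A b"
  shows "a = b"
  using es_antisym[OF assms(1) es_le_if_down_subset[OF assms(1,2)] es_le_if_down_subset[OF assms(1,3)]]
    assms(4) by simp

lemma essp_is_es: "is_essp A \<Longrightarrow> is_es A"
  by (simp add: is_essp_def)

lemma iso_familyD:
  assumes "is_essp A"
  shows "\<forall>\<theta>\<in>es_sym A. \<exists>x y. conf A x \<and> conf A y \<and> bij_rel \<theta> x y"
    and "\<forall>x. conf A x \<longrightarrow> Id_on x \<in> es_sym A"
    and "\<forall>\<theta>\<in>es_sym A. \<theta>\<inverse> \<in> es_sym A"
    and "\<forall>\<theta>\<in>es_sym A. \<forall>\<phi>\<in>es_sym A. Range \<theta> = Domain \<phi> \<longrightarrow> \<theta> O \<phi> \<in> es_sym A"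
    and "\<forall>\<theta>\<in>es_sym A. \<forall>x. conf A x \<and> x \<subseteq> Domain \<theta> \<longrightarrow> \<theta> \<inter> (x \<times> UNIV) \<in> es_sym A"
    and "\<forall>\<theta>\<in>es_sym A. \<forall>x. conf A x \<and> Domain \<theta> \<subseteq> x \<longrightarrow> (\<exists>\<theta>'\<in>es_sym A. \<theta> \<subseteq> \<theta>' \<and> Domain \<theta>' = x)"
    and "\<forall>\<theta>\<in>es_sym A. \<forall>(a, b)\<in>\<theta>. es_pol A a = es_pol A b"
  using assms unfolding is_essp_def iso_family_def by - (elim conjE, assumption)+

lemma sym_bij:
  assumes "is_essp A" "\<theta> \<in> es_sym A"
  shows "conf A (Domain \<theta>) \<and> conf A (Range \<theta>) \<and> bij_rel \<theta> (Domain \<theta>) (Range \<theta>)"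
proof -
  obtain x y where "conf A x" "conf A y" "bij_rel \<theta> x y"
    using iso_familyD(1)[OF assms(1)] assms(2) by blast
  moreover from \<open>bij_rel \<theta> x y\<close> have "Domain \<theta> = x" "Range \<theta> = y"
    unfolding bij_rel_def by force+
  ultimately show ?thesis by simp
qed

lemma sym_conf_Domain: "is_essp A \<Longrightarrow> \<theta> \<in> es_sym A \<Longrightarrow> conf A (Domain \<theta>)"
  using sym_bij by blast

lemma sym_conf_Range: "is_essp A \<Longrightarrow> \<theta> \<in> es_sym A \<Longrightarrow> conf A (Range \<theta>)"
  using sym_bij by blast

lemma sym_functional: "is_essp A \<Longrightarrow> \<theta> \<in> es_sym A \<Longrightarrow> (a, b) \<in> \<theta> \<Longrightarrow> (a, c) \<in> \<theta> \<Longrightarrow> b = c"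
  using sym_bij[of A \<theta>] unfolding bij_rel_def by blast

lemma sym_injective: "is_essp A \<Longrightarrow> \<theta> \<in> es_sym A \<Longrightarrow> (a, b) \<in> \<theta> \<Longrightarrow> (c, b) \<in> \<theta> \<Longrightarrow> a = c"
  using sym_bij[of A \<theta>] unfolding bij_rel_def by blast

lemma sym_finite:
  assumes "is_essp A" "\<theta> \<in> es_sym A"
  shows "finite \<theta>"
proof (rule finite_subset)
  show "\<theta> \<subseteq> Domain \<theta> \<times> Range \<theta>" by auto
  show "finite (Domain \<theta> \<times> Range \<theta>)"
    using conf_finite[OF sym_conf_Domain[OF assms]] conf_finite[OF sym_conf_Range[OF assms]] by simp
qed

lemma sym_Id_on: "is_essp A \<Longrightarrow> conf A x \<Longrightarrow> Id_on x \<in> es_sym A"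
  using iso_familyD(2) by blast

lemma sym_converse: "is_essp A \<Longrightarrow> \<theta> \<in> es_sym A \<Longrightarrow> \<theta>\<inverse> \<in> es_sym A"
  using iso_familyD(3) by blast

lemma sym_relcomp:
  "is_essp A \<Longrightarrow> \<theta> \<in> es_sym A \<Longrightarrow> \<phi> \<in> es_sym A \<Longrightarrow> Range \<theta> = Domain \<phi> \<Longrightarrow> \<theta> O \<phi> \<in> es_sym A"
  using iso_familyD(4) by blast

lemma sym_restrict:
  assumes "is_essp A" "\<theta> \<in> es_sym A" "conf A x" "x \<subseteq> Domain \<theta>"
  shows "\<theta> \<inter> (x \<times> UNIV) \<in> es_sym A"
  using iso_familyD(5)[OF assms(1), rule_format, OF assms(2) conjI[OF assms(3,4)]] .

lemma sym_extend:
  assumes "is_essp A" "\<theta> \<in> es_sym A" "conf A x" "Domain \<theta> \<subseteq> x"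
  obtains \<theta>' where "\<theta>' \<in> es_sym A" "\<theta> \<subseteq> \<theta>'" "Domain \<theta>' = x"
  using iso_familyD(6)[OF assms(1), rule_format, OF assms(2) conjI[OF assms(3,4)]] by blast

lemma sym_pol: "is_essp A \<Longrightarrow> \<theta> \<in> es_sym A \<Longrightarrow> (a, b) \<in> \<theta> \<Longrightarrow> es_pol A a = es_pol A b"
  using iso_familyD(7) by fast

lemma sym_eq_if_subset_Domain:
  assumes "is_essp A" "\<theta>' \<in> es_sym A" "\<theta> \<subseteq> \<theta>'" "Domain \<theta>' \<subseteq> Domain \<theta>"
  shows "\<theta> = \<theta>'"
proof
  show "\<theta>' \<subseteq> \<theta>"
  proof
    fix p assume p: "p \<in> \<theta>'"
    obtain x y where xy: "p = (x, y)" by fastforce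
    then obtain y' where "(x, y') \<in> \<theta>" using p assms(4) by blast
    moreover have "y' = y" using sym_functional[OF assms(1,2)] assms(3) calculation p xy(1) by blast
    ultimately show "p \<in> \<theta>" using xy(1) by simp
  qed
qed (rule assms(3))

lemma sym_eq_insert:
  assumes "is_essp A" "\<theta>' \<in> es_sym A" "\<theta> \<subseteq> \<theta>'" "Domain \<theta>' = insert a (Domain \<theta>)" "(a, b) \<in> \<theta>'"
  shows "\<theta>' = insert (a, b) \<theta>"
  by (rule sym_eq_if_subset_Domain[OF assms(1,2), symmetric]) (use assms(3-5) in auto)

lemma prime_at_eq_restrict: "prime_at A \<theta> a = \<theta> \<inter> (down A a \<times> UNIV)"
  unfolding prime_at_def down_def by auto

lemma prime_at_subset: "prime_at A \<theta> a \<subseteq> \<theta>"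
  unfolding prime_at_def by auto

lemma prime_at_sym:
  assumes "is_essp A" "\<theta> \<in> es_sym A" "a \<in> Domain \<theta>"
  shows "prime_at A \<theta> a \<in> es_sym A" "Domain (prime_at A \<theta> a) = down A a"
proof -
  have c: "conf A (Domain \<theta>)" using sym_conf_Domain assms by blast
  have d: "down A a \<subseteq> Domain \<theta>" using down_subset_conf[OF c assms(3)] .
  show "prime_at A \<theta> a \<in> es_sym A"
    unfolding prime_at_eq_restrict
    using sym_restrict[OF assms(1,2) conf_down[OF essp_is_es[OF assms(1)] c assms(3)] d] .
  show "Domain (prime_at A \<theta> a) = down A a"
    unfolding prime_at_eq_restrict using d by auto
qed

lemma prime_at_top:
  assumes "is_essp A" "\<theta> \<in> es_sym A" "(a, b) \<in> \<theta>"
  shows "(a, b) \<in> prime_at A \<theta> a"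
proof -
  have "a \<in> es_ev A" using conf_subset_ev[OF sym_conf_Domain[OF assms(1,2)]] assms(3) by blast
  thus ?thesis unfolding prime_at_def using es_refl[OF essp_is_es[OF assms(1)]] assms(3) by simp
qed

lemma prime_at_mono_eq:
  assumes "is_essp A" "\<phi> \<in> es_sym A" "\<theta> \<subseteq> \<phi>" "down A a \<subseteq> Domain \<theta>"
  shows "prime_at A \<theta> a = prime_at A \<phi> a"
proof
  show "prime_at A \<theta> a \<subseteq> prime_at A \<phi> a"
    using assms(3) unfolding prime_at_def by blast
  show "prime_at A \<phi> a \<subseteq> prime_at A \<theta> a"
  proof
    fix p assume p: "p \<in> prime_at A \<phi> a"
    then obtain c d where cd: "p = (c, d)" "c \<in> down A a" "(c, d) \<in> \<phi>"
      unfolding prime_at_eq_restrict by auto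
    then obtain d' where "(c, d') \<in> \<theta>" using assms(4) by blast
    moreover have "d' = d" using sym_functional[OF assms(1,2)] assms(3) calculation cd(3) by blast
    ultimately show "p \<in> prime_at A \<theta> a" using cd unfolding prime_at_eq_restrict by blast
  qed
qed

lemma prime_at_eq_of_subset:
  assumes "is_essp A" "\<theta> \<in> es_sym A" "\<phi> \<in> es_sym A" "\<theta> \<subseteq> \<phi>" "a \<in> Domain \<theta>"
  shows "prime_at A \<theta> a = prime_at A \<phi> a"
  using prime_at_mono_eq[OF assms(1,3,4)] down_subset_conf[OF sym_conf_Domain[OF assms(1,2)] assms(5)] .

lemma prime_at_unique:
  assumes "is_essp A" "\<theta> \<in> es_sym A" "\<chi> \<subseteq> \<theta>" "Domain \<chi> = down A a"
  shows "\<chi> = prime_at A \<theta> a"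
proof -
  have "prime_at A \<chi> a = \<chi>" unfolding prime_at_eq_restrict using assms(4) by auto
  moreover have "prime_at A \<chi> a = prime_at A \<theta> a" using prime_at_mono_eq[OF assms(1,2,3)] assms(4) by blast
  ultimately show ?thesis by simp
qed

section \<open>Configurations of the symmetry\<close>

definition prime_events :: "('a, 'z) essp_scheme \<Rightarrow> ('a \<times> 'a) set \<Rightarrow> (('a \<times> 'a) \<times> ('a \<times> 'a) set) set" where
  "prime_events A \<theta> = (\<lambda>p. (p, prime_at A \<theta> (fst p))) ` \<theta>"

lemma tilde_simps [simp]:
  "es_ev (tilde_base A) = tev A"
  "es_le (tilde_base A) = (\<lambda>e e'. e \<in> tev A \<and> e' \<in> tev A \<and> snd e \<subseteq> snd e')"
  "es_con (tilde_base A) = {X. finite X \<and> X \<subseteq> tev A \<and> (\<exists>\<phi>\<in>es_sym A. \<Union> (snd ` X) \<subseteq> \<phi>)}"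
  "es_pol (tilde_base A) = (\<lambda>e. es_pol A (fst (fst e)))"
  "es_ev (tilde A) = tev A"
  "es_le (tilde A) = (\<lambda>e e'. e \<in> tev A \<and> e' \<in> tev A \<and> snd e \<subseteq> snd e')"
  "es_con (tilde A) = {X. finite X \<and> X \<subseteq> tev A \<and> (\<exists>\<phi>\<in>es_sym A. \<Union> (snd ` X) \<subseteq> \<phi>)}"
  "es_pol (tilde A) = (\<lambda>e. es_pol A (fst (fst e)))"
  "es_sym (tilde A) = hsym A"
  by (simp_all add: tilde_base_def tilde_def)

lemma conf_tilde_eq: "conf (tilde A) = conf (tilde_base A)"
  unfolding conf_def[abs_def] by simp

lemma conf_tilde_base_iff:
  "conf (tilde_base A) X \<longleftrightarrow> X \<subseteq> tev A \<and> finite X \<and> (\<exists>\<phi>\<in>es_sym A. \<Union> (snd ` X) \<subseteq> \<phi>) \<and>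
     (\<forall>e\<in>X. \<forall>d. d \<in> tev A \<and> snd d \<subseteq> snd e \<longrightarrow> d \<in> X)"
  unfolding conf_def by auto

lemma tev_iff: "e \<in> tev A \<longleftrightarrow> snd e \<in> es_sym A \<and> fst e \<in> snd e \<and> Domain (snd e) = down A (fst (fst e))"
  unfolding tev_def down_def by (cases e) auto

lemma tev_sym: "e \<in> tev A \<Longrightarrow> snd e \<in> es_sym A"
  unfolding tev_iff by simp

lemma tev_top: "e \<in> tev A \<Longrightarrow> fst e \<in> snd e"
  unfolding tev_iff by simp

lemma tev_Domain: "e \<in> tev A \<Longrightarrow> Domain (snd e) = down A (fst (fst e))"
  unfolding tev_iff by simp

lemma tev_prime_at: "e \<in> tev A \<Longrightarrow> prime_at A (snd e) (fst (fst e)) = snd e"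
  unfolding tev_iff prime_at_eq_restrict by auto

lemma tev_ev: "is_essp A \<Longrightarrow> e \<in> tev A \<Longrightarrow> fst (fst e) \<in> es_ev A"
  using conf_subset_ev[OF sym_conf_Domain] tev_sym tev_top by (metis Domain.DomainI prod.collapse subsetD)

lemma tev_eq_prime_at:
  assumes "is_essp A" "\<phi> \<in> es_sym A" "e \<in> tev A" "snd e \<subseteq> \<phi>"
  shows "snd e = prime_at A \<phi> (fst (fst e))"
  using prime_at_unique[OF assms(1,2,4)] tev_Domain[OF assms(3)] .

lemma prime_at_tev:
  assumes "is_essp A" "\<theta> \<in> es_sym A" "(a, b) \<in> \<theta>"
  shows "((a, b), prime_at A \<theta> a) \<in> tev A"
proof -
  have "a \<in> Domain \<theta>" using assms(3) by blast
  thus ?thesis unfolding tev_iff using prime_at_sym[OF assms(1,2)] prime_at_top[OF assms] by simp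
qed

lemma mem_prime_events: "e \<in> prime_events A \<theta> \<longleftrightarrow> (\<exists>a b. (a, b) \<in> \<theta> \<and> e = ((a, b), prime_at A \<theta> a))"
  unfolding prime_events_def by auto

lemma prime_eventsI: "(a, b) \<in> \<theta> \<Longrightarrow> ((a, b), prime_at A \<theta> a) \<in> prime_events A \<theta>"
  unfolding mem_prime_events by blast

lemma fst_prime_events [simp]: "fst ` prime_events A \<theta> = \<theta>"
  unfolding prime_events_def by force

lemma prime_events_inj: "prime_events A \<theta> = prime_events A \<theta>' \<Longrightarrow> \<theta> = \<theta>'"
  by (metis fst_prime_events)

lemma prime_events_subsetD: "prime_events A \<theta> \<subseteq> prime_events A \<theta>' \<Longrightarrow> \<theta> \<subseteq> \<theta>'"
  by (metis fst_prime_events image_mono)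

lemma prime_events_tev: "is_essp A \<Longrightarrow> \<theta> \<in> es_sym A \<Longrightarrow> prime_events A \<theta> \<subseteq> tev A"
  unfolding prime_events_def using prime_at_tev by fastforce

lemma tev_mem_prime_events: "e \<in> tev A \<Longrightarrow> e \<in> prime_events A (snd e)"
  using tev_top tev_prime_at prime_eventsI by (metis prod.collapse)

lemma conf_prime_events:
  assumes A: "is_essp A" and \<theta>: "\<theta> \<in> es_sym A"
  shows "conf (tilde_base A) (prime_events A \<theta>)"
  unfolding conf_tilde_base_iff
proof (intro conjI ballI allI impI)
  show "prime_events A \<theta> \<subseteq> tev A"
    using prime_events_tev[OF A \<theta>] .
  show "finite (prime_events A \<theta>)"
    unfolding prime_events_def using sym_finite[OF A \<theta>] by simp
  have "\<Union> (snd ` prime_events A \<theta>) \<subseteq> \<theta>"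
    unfolding prime_events_def by (auto simp: prime_at_def)
  thus "\<exists>\<phi>\<in>es_sym A. \<Union> (snd ` prime_events A \<theta>) \<subseteq> \<phi>" using \<theta> by blast
  fix e d assume e: "e \<in> prime_events A \<theta>" and d: "d \<in> tev A \<and> snd d \<subseteq> snd e"
  obtain a b where "e = ((a, b), prime_at A \<theta> a)" using e unfolding mem_prime_events by blast
  hence "snd d \<subseteq> \<theta>" using d prime_at_subset[of A \<theta> a] by auto
  obtain a' b' where d': "d = ((a', b'), snd d)" by (metis prod.collapse)
  have "snd d = prime_at A \<theta> a'" using tev_eq_prime_at[OF A \<theta>] d d' \<open>snd d \<subseteq> \<theta>\<close> by (metis fst_conv)
  moreover have "(a', b') \<in> \<theta>" using tev_top[of d A] d d' \<open>snd d \<subseteq> \<theta>\<close> by (metis fst_conv subsetD)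
  ultimately show "d \<in> prime_events A \<theta>" using prime_eventsI d' by metis
qed

lemma conf_tilde_base_dc:
  "conf (tilde_base A) X \<Longrightarrow> e \<in> X \<Longrightarrow> d \<in> tev A \<Longrightarrow> snd d \<subseteq> snd e \<Longrightarrow> d \<in> X"
  unfolding conf_tilde_base_iff by blast

lemma conf_tilde_base_snd_subset:
  assumes A: "is_essp A" and X: "conf (tilde_base A) X" and e: "e \<in> X"
  shows "snd e \<subseteq> fst ` X"
proof
  obtain \<phi> where \<phi>: "\<phi> \<in> es_sym A" "\<Union> (snd ` X) \<subseteq> \<phi>"
    using X unfolding conf_tilde_base_iff by blast
  have et: "e \<in> tev A" using X e unfolding conf_tilde_base_iff by blast
  have e_prime: "snd e = prime_at A \<phi> (fst (fst e))"
    using tev_eq_prime_at[OF A \<phi>(1) et] \<phi>(2) e by blast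
  fix p assume p: "p \<in> snd e"
  obtain c d where cd: "p = (c, d)" by fastforce
  have "(c, d) \<in> \<phi>" using p cd \<phi>(2) e by blast
  hence ct: "((c, d), prime_at A \<phi> c) \<in> tev A" using prime_at_tev[OF A \<phi>(1)] by blast
  have "es_le A c (fst (fst e))" using p cd e_prime unfolding prime_at_def by auto
  hence "prime_at A \<phi> c \<subseteq> snd e"
    unfolding e_prime prime_at_def using es_trans[OF essp_is_es[OF A]] by auto
  hence "((c, d), prime_at A \<phi> c) \<in> X" using conf_tilde_base_dc[OF X e ct] by simp
  thus "p \<in> fst ` X" using cd by force
qed

lemma conf_tilde_base_sym:
  assumes A: "is_essp A" and X: "conf (tilde_base A) X"
  shows "fst ` X \<in> es_sym A"
proof -
  obtain \<phi> where \<phi>: "\<phi> \<in> es_sym A" "\<Union> (snd ` X) \<subseteq> \<phi>"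
    using X unfolding conf_tilde_base_iff by blast
  have Xt: "X \<subseteq> tev A" using X unfolding conf_tilde_base_iff by blast
  have sub: "fst ` X \<subseteq> \<phi>" using \<phi>(2) Xt tev_top by fastforce
  have "conf A (Domain (fst ` X))"
  proof (rule conf_subset[OF essp_is_es[OF A] sym_conf_Domain[OF A \<phi>(1)]])
    show "Domain (fst ` X) \<subseteq> Domain \<phi>" using sub by blast
    show "\<forall>a\<in>Domain (fst ` X). \<forall>b. es_le A b a \<longrightarrow> b \<in> Domain (fst ` X)"
    proof (intro ballI allI impI)
      fix a b assume "a \<in> Domain (fst ` X)" "es_le A b a"
      then obtain e a2 where e: "e \<in> X" "fst e = (a, a2)" by force
      hence "b \<in> Domain (snd e)" using tev_Domain[of e A] Xt \<open>es_le A b a\<close> unfolding down_def by auto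
      thus "b \<in> Domain (fst ` X)" using conf_tilde_base_snd_subset[OF A X e(1)] by blast
    qed
  qed
  moreover have "fst ` X = \<phi> \<inter> (Domain (fst ` X) \<times> UNIV)"
  proof
    show "fst ` X \<subseteq> \<phi> \<inter> (Domain (fst ` X) \<times> UNIV)" using sub by auto
    show "\<phi> \<inter> (Domain (fst ` X) \<times> UNIV) \<subseteq> fst ` X"
    proof
      fix p assume "p \<in> \<phi> \<inter> (Domain (fst ` X) \<times> UNIV)"
      then obtain a b b' where ab: "p = (a, b)" "(a, b) \<in> \<phi>" "(a, b') \<in> fst ` X" by blast
      hence "b' = b" using sub sym_functional[OF A \<phi>(1)] by blast
      thus "p \<in> fst ` X" using ab by simp
    qed
  qed
  ultimately show ?thesis using sym_restrict[OF A \<phi>(1)] sub by (metis Domain_mono)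
qed

lemma conf_tilde_base_eq_prime_events:
  assumes A: "is_essp A" and X: "conf (tilde_base A) X"
  shows "X = prime_events A (fst ` X)"
proof -
  let ?\<theta> = "fst ` X"
  have \<theta>: "?\<theta> \<in> es_sym A" using conf_tilde_base_sym[OF A X] .
  have prime: "e = (fst e, prime_at A ?\<theta> (fst (fst e)))" if "e \<in> X" for e
  proof -
    have "e \<in> tev A" using X that unfolding conf_tilde_base_iff by blast
    thus ?thesis using tev_eq_prime_at[OF A \<theta>] conf_tilde_base_snd_subset[OF A X that] by simp
  qed
  show ?thesis
  proof
    show "X \<subseteq> prime_events A ?\<theta>"
      using prime prime_eventsI by (metis image_eqI prod.collapse subsetI)
    show "prime_events A ?\<theta> \<subseteq> X"
    proof
      fix e assume "e \<in> prime_events A ?\<theta>"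
      then obtain a b where e: "(a, b) \<in> ?\<theta>" "e = ((a, b), prime_at A ?\<theta> a)"
        unfolding mem_prime_events by blast
      then obtain e' where e': "e' \<in> X" "fst e' = (a, b)" by force
      thus "e \<in> X" using prime[OF e'(1)] e(2) by simp
    qed
  qed
qed

lemma conf_tildeE:
  assumes "is_essp A" "conf (tilde A) X"
  obtains \<theta> where "\<theta> \<in> es_sym A" "X = prime_events A \<theta>"
  using conf_tilde_base_sym conf_tilde_base_eq_prime_events assms unfolding conf_tilde_eq by blast

lemma tev_below_prime_events:
  fixes A :: "'a essp"
  assumes "is_essp A" "e \<in> tev A" "d \<in> tev A" "snd d \<subseteq> snd e"
  shows "d \<in> prime_events A (snd e)"
  using conf_tilde_base_dc[OF conf_prime_events[OF assms(1) tev_sym[OF assms(2)]]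
      tev_mem_prime_events[OF assms(2)] assms(3,4)] .

lemma tev_eq_if_snd_eq:
  assumes A: "is_essp A" and d: "d \<in> tev A" and f: "f \<in> tev A" and s: "snd d = snd f"
  shows "d = f"
proof -
  have "fst (fst d) = fst (fst f)"
    using down_inj[OF essp_is_es[OF A] tev_ev[OF A d] tev_ev[OF A f]] tev_Domain[OF d] tev_Domain[OF f] s
    by simp
  moreover have "fst d \<in> snd f" "fst f \<in> snd f" using tev_top[OF d] tev_top[OF f] s by auto
  ultimately have "fst d = fst f"
    using sym_functional[OF A tev_sym[OF f]] by (metis prod.collapse)
  thus "d = f" using s by (simp add: prod_eq_iff)
qed

lemma is_es_tilde:
  fixes A :: "'a essp"
  assumes A: "is_essp A"
  shows "is_es (tilde A)"
proof -
  have antis: "d = f" if "d \<in> tev A" "f \<in> tev A" "snd d = snd f" for d f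
    using tev_eq_if_snd_eq[OF A] that .
  have fin: "finite {d. es_le (tilde A) d f}" if f: "f \<in> tev A" for f
  proof (rule finite_subset)
    show "{d. es_le (tilde A) d f} \<subseteq> prime_events A (snd f)"
      using tev_below_prime_events[OF A f] by auto
    show "finite (prime_events A (snd f))"
      using conf_prime_events[OF A tev_sym[OF f]] conf_finite by blast
  qed
  have sing: "\<And>f. f \<in> tev A \<Longrightarrow> {f} \<in> es_con (tilde A)"
  proof -
    fix f assume f: "f \<in> tev A"
    have "snd f \<in> es_sym A" using tev_sym[OF f] .
    thus "{f} \<in> es_con (tilde A)" using f by auto
  qed
  have ins: "\<And>X a b. X \<in> es_con (tilde A) \<Longrightarrow> a \<in> X \<Longrightarrow> es_le (tilde A) b a \<Longrightarrow> insert b X \<in> es_con (tilde A)"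
  proof -
    fix X a b assume X: "X \<in> es_con (tilde A)" and a: "a \<in> X" and ba: "es_le (tilde A) b a"
    obtain \<phi> where ph: "\<phi> \<in> es_sym A" "\<Union> (snd ` X) \<subseteq> \<phi>" using X by auto
    have "snd b \<subseteq> \<phi>" using ba a ph(2) by auto
    thus "insert b X \<in> es_con (tilde A)" using X ph ba by auto
  qed
  have sub: "\<And>X Y. X \<in> es_con (tilde A) \<Longrightarrow> Y \<subseteq> X \<Longrightarrow> Y \<in> es_con (tilde A)"
  proof -
    fix X Y assume X: "X \<in> es_con (tilde A)" and Y: "Y \<subseteq> X"
    obtain \<phi> where ph: "\<phi> \<in> es_sym A" "\<Union> (snd ` X) \<subseteq> \<phi>" using X by auto
    have "\<Union> (snd ` Y) \<subseteq> \<phi>" using Y ph(2) by blast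
    moreover have "finite Y" using X Y finite_subset by auto
    moreover have "Y \<subseteq> tev A" using X Y by auto
    ultimately show "Y \<in> es_con (tilde A)" using ph(1) by auto
  qed
  show ?thesis unfolding is_es_def
    apply (intro conjI)
    subgoal by simp
    subgoal by simp
    subgoal using antis by auto
    subgoal by auto
    subgoal using fin by simp
    subgoal by simp
    subgoal using sing by simp
    subgoal using sub by blast
    subgoal using ins by blast
    done
qed

section \<open>Symmetries of the symmetry\<close>

definition conjugate :: "('a \<times> 'a) set \<Rightarrow> ('a \<times> 'a) set \<Rightarrow> ('a \<times> 'a) set \<Rightarrow> ('a \<times> 'a) set" where
  "conjugate \<phi> \<theta> \<psi> = \<phi>\<inverse> O \<theta> O \<psi>"

definition sym_square :: "('a, 'z) essp_scheme \<Rightarrow> ('a \<times> 'a) set \<Rightarrow> ('a \<times> 'a) set \<Rightarrow> ('a \<times> 'a) set \<Rightarrow> bool" where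
  "sym_square A \<theta> \<phi> \<psi> \<longleftrightarrow> \<theta> \<in> es_sym A \<and> \<phi> \<in> es_sym A \<and> \<psi> \<in> es_sym A \<and> Domain \<phi> = Domain \<theta> \<and> Domain \<psi> = Range \<theta>"

lemma sym_squareD:
  assumes "sym_square A \<theta> \<phi> \<psi>"
  shows "\<theta> \<in> es_sym A" "\<phi> \<in> es_sym A" "\<psi> \<in> es_sym A" "Domain \<phi> = Domain \<theta>" "Domain \<psi> = Range \<theta>"
  using assms unfolding sym_square_def by auto

definition square_iso :: "('a, 'z) essp_scheme \<Rightarrow> ('a \<times> 'a) set \<Rightarrow> ('a \<times> 'a) set \<Rightarrow> ('a \<times> 'a) set \<Rightarrow> ((('a \<times> 'a) \<times> ('a \<times> 'a) set) \<times> (('a \<times> 'a) \<times> ('a \<times> 'a) set)) set" where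
  "square_iso A \<theta> \<phi> \<psi> = {(((a,b), prime_at A \<theta> a), ((a',b'), prime_at A (conjugate \<phi> \<theta> \<psi>) a')) | a b a' b'.
     (a,b) \<in> \<theta> \<and> (a,a') \<in> \<phi> \<and> (b,b') \<in> \<psi>}"

lemma mem_conjugate: "(a',b') \<in> conjugate \<phi> \<theta> \<psi> \<longleftrightarrow> (\<exists>a b. (a,a') \<in> \<phi> \<and> (a,b) \<in> \<theta> \<and> (b,b') \<in> \<psi>)"
  unfolding conjugate_def by blast

lemma mem_square_iso: "(e,e') \<in> square_iso A \<theta> \<phi> \<psi> \<longleftrightarrow> (\<exists>a b a' b'. (a,b) \<in> \<theta> \<and> (a,a') \<in> \<phi> \<and> (b,b') \<in> \<psi> \<and>
   e = ((a,b), prime_at A \<theta> a) \<and> e' = ((a',b'), prime_at A (conjugate \<phi> \<theta> \<psi>) a'))"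
  unfolding square_iso_def by blast

lemma conjugate_sym:
  assumes A: "is_essp A" and v: "sym_square A \<theta> \<phi> \<psi>"
  shows "conjugate \<phi> \<theta> \<psi> \<in> es_sym A" "Domain (conjugate \<phi> \<theta> \<psi>) = Range \<phi>" "Range (conjugate \<phi> \<theta> \<psi>) = Range \<psi>"
proof -
  have th: "\<theta> \<in> es_sym A" and ph: "\<phi> \<in> es_sym A" and ps: "\<psi> \<in> es_sym A"
    and d1: "Domain \<phi> = Domain \<theta>" and d2: "Domain \<psi> = Range \<theta>" using v unfolding sym_square_def by auto
  have s1: "\<phi>\<inverse> O \<theta> \<in> es_sym A" using sym_relcomp[OF A sym_converse[OF A ph] th] d1 by simp
  have "Range (\<phi>\<inverse> O \<theta>) = Range \<theta>"
  proof
    show "Range (\<phi>\<inverse> O \<theta>) \<subseteq> Range \<theta>" by auto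
    show "Range \<theta> \<subseteq> Range (\<phi>\<inverse> O \<theta>)"
    proof
      fix x assume "x \<in> Range \<theta>"
      then obtain a where ax: "(a,x) \<in> \<theta>" by blast
      then obtain a' where "(a,a') \<in> \<phi>" using d1 by blast
      thus "x \<in> Range (\<phi>\<inverse> O \<theta>)" using ax by blast
    qed
  qed
  hence s2: "\<phi>\<inverse> O \<theta> O \<psi> \<in> es_sym A" using sym_relcomp[OF A s1 ps] d2 by (simp add: O_assoc)
  thus "conjugate \<phi> \<theta> \<psi> \<in> es_sym A" unfolding conjugate_def .
  show "Domain (conjugate \<phi> \<theta> \<psi>) = Range \<phi>" unfolding conjugate_def
  proof
    show "Domain (\<phi>\<inverse> O \<theta> O \<psi>) \<subseteq> Range \<phi>" by auto
    show "Range \<phi> \<subseteq> Domain (\<phi>\<inverse> O \<theta> O \<psi>)"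
    proof
      fix x assume "x \<in> Range \<phi>"
      then obtain a where a: "(a,x) \<in> \<phi>" by blast
      then obtain b where b: "(a,b) \<in> \<theta>" using d1 by blast
      then obtain c where "(b,c) \<in> \<psi>" using d2 by blast
      thus "x \<in> Domain (\<phi>\<inverse> O \<theta> O \<psi>)" using a b by blast
    qed
  qed
  show "Range (conjugate \<phi> \<theta> \<psi>) = Range \<psi>" unfolding conjugate_def
  proof
    show "Range (\<phi>\<inverse> O \<theta> O \<psi>) \<subseteq> Range \<psi>" by auto
    show "Range \<psi> \<subseteq> Range (\<phi>\<inverse> O \<theta> O \<psi>)"
    proof
      fix y assume "y \<in> Range \<psi>"
      then obtain b where b: "(b,y) \<in> \<psi>" by blast
      then obtain a where a: "(a,b) \<in> \<theta>" using d2 by blast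
      then obtain a' where "(a,a') \<in> \<phi>" using d1 by blast
      thus "y \<in> Range (\<phi>\<inverse> O \<theta> O \<psi>)" using a b by blast
    qed
  qed
qed

lemma conjugate_mono: "\<phi> \<subseteq> \<phi>2 \<Longrightarrow> \<theta> \<subseteq> \<theta>2 \<Longrightarrow> \<psi> \<subseteq> \<psi>2 \<Longrightarrow> conjugate \<phi> \<theta> \<psi> \<subseteq> conjugate \<phi>2 \<theta>2 \<psi>2"
  unfolding conjugate_def by blast

lemma conjugate_Id:
  "\<theta> \<subseteq> Domain \<theta> \<times> Range \<theta> \<Longrightarrow> conjugate (Id_on (Domain \<theta>)) \<theta> (Id_on (Range \<theta>)) = \<theta>"
  unfolding conjugate_def by auto

lemma square_iso_eq_Collect:
  "square_iso A \<theta> \<phi> \<psi> = {(e, e'). e \<in> prime_events A \<theta> \<and> e' \<in> prime_events A (conjugate \<phi> \<theta> \<psi>) \<and>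
     (fst (fst e), fst (fst e')) \<in> \<phi> \<and> (snd (fst e), snd (fst e')) \<in> \<psi>}" (is "_ = ?R")
proof (intro set_eqI iffI)
  fix q assume "q \<in> square_iso A \<theta> \<phi> \<psi>"
  then obtain a b a' b' where m: "(a, b) \<in> \<theta>" "(a, a') \<in> \<phi>" "(b, b') \<in> \<psi>"
    "q = (((a, b), prime_at A \<theta> a), ((a', b'), prime_at A (conjugate \<phi> \<theta> \<psi>) a'))"
    by (metis mem_square_iso prod.collapse)
  moreover have "(a', b') \<in> conjugate \<phi> \<theta> \<psi>" unfolding mem_conjugate using m by blast
  ultimately show "q \<in> ?R" using prime_eventsI[of a b \<theta> A] prime_eventsI[of a' b' "conjugate \<phi> \<theta> \<psi>" A] by simp
next
  fix q assume "q \<in> ?R"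
  then obtain a b a' b' where "(a, b) \<in> \<theta>" "(a, a') \<in> \<phi>" "(b, b') \<in> \<psi>"
    "q = (((a, b), prime_at A \<theta> a), ((a', b'), prime_at A (conjugate \<phi> \<theta> \<psi>) a'))"
    unfolding mem_prime_events by auto
  thus "q \<in> square_iso A \<theta> \<phi> \<psi>" unfolding square_iso_def by blast
qed

lemma sym_eq_conjugate:
  assumes A: "is_essp A" and \<theta>': "\<theta>' \<in> es_sym A" and d: "Domain \<phi> = Domain \<theta>" "Range \<phi> = Domain \<theta>'"
    "Domain \<psi> = Range \<theta>"
    and comm: "\<And>a b a' b'. (a, b) \<in> \<theta> \<Longrightarrow> (a, a') \<in> \<phi> \<Longrightarrow> (b, b') \<in> \<psi> \<Longrightarrow> (a', b') \<in> \<theta>'"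
  shows "\<theta>' = conjugate \<phi> \<theta> \<psi>"
proof
  show "conjugate \<phi> \<theta> \<psi> \<subseteq> \<theta>'" unfolding conjugate_def using comm by blast
  show "\<theta>' \<subseteq> conjugate \<phi> \<theta> \<psi>"
  proof
    fix p assume p: "p \<in> \<theta>'"
    obtain a' b' where p': "p = (a', b')" by (rule prod.exhaust)
    have "a' \<in> Range \<phi>" using p p' d(2) by blast
    then obtain a where a: "(a, a') \<in> \<phi>" by blast
    then obtain b where b: "(a, b) \<in> \<theta>" using d(1) by blast
    then obtain b2 where b2: "(b, b2) \<in> \<psi>" using d(3) by blast
    have "b2 = b'" using sym_functional[OF A \<theta>'] comm[OF b a b2] p p' by blast
    thus "p \<in> conjugate \<phi> \<theta> \<psi>" unfolding p' mem_conjugate using a b b2 by blast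
  qed
qed

lemma hsym_square_iso:
  fixes A :: "'a essp"
  assumes A: "is_essp A" and P: "\<Phi> \<in> hsym A"
  shows "\<exists>\<theta> \<phi> \<psi>. sym_square A \<theta> \<phi> \<psi> \<and> \<Phi> = square_iso A \<theta> \<phi> \<psi>"
proof -
  obtain X X' \<phi> \<psi> where
    X: "conf (tilde_base A) X" and X': "conf (tilde_base A) X'" and ph: "\<phi> \<in> es_sym A" and ps: "\<psi> \<in> es_sym A"
    and d: "Domain \<phi> = Domain (fst ` X)" "Range \<phi> = Domain (fst ` X')" "Domain \<psi> = Range (fst ` X)"
    and comm: "\<forall>(a, b)\<in>fst ` X. \<forall>a' b'. (a, a') \<in> \<phi> \<and> (b, b') \<in> \<psi> \<longrightarrow> (a', b') \<in> fst ` X'"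
    and \<Phi>: "\<Phi> = {(e, e'). e \<in> X \<and> e' \<in> X' \<and> (fst (fst e), fst (fst e')) \<in> \<phi> \<and>
                     (snd (fst e), snd (fst e')) \<in> \<psi>}"
    using P unfolding hsym_def by blast
  let ?\<theta> = "fst ` X"
  have v: "sym_square A ?\<theta> \<phi> \<psi>"
    unfolding sym_square_def using conf_tilde_base_sym[OF A X] ph ps d by simp
  have "fst ` X' = conjugate \<phi> ?\<theta> \<psi>"
    using sym_eq_conjugate[OF A conf_tilde_base_sym[OF A X'] d] comm by blast
  hence "\<Phi> = square_iso A ?\<theta> \<phi> \<psi>"
    unfolding \<Phi> square_iso_eq_Collect
    using conf_tilde_base_eq_prime_events[OF A X] conf_tilde_base_eq_prime_events[OF A X'] by simp
  thus ?thesis using v by blast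
qed

lemma square_iso_hsym:
  fixes A :: "'a essp"
  assumes A: "is_essp A" and v: "sym_square A \<theta> \<phi> \<psi>"
  shows "square_iso A \<theta> \<phi> \<psi> \<in> hsym A"
proof -
  have \<theta>: "\<theta> \<in> es_sym A" and \<phi>: "\<phi> \<in> es_sym A" and \<psi>: "\<psi> \<in> es_sym A"
    and d: "Domain \<phi> = Domain \<theta>" "Domain \<psi> = Range \<theta>" using v unfolding sym_square_def by auto
  note \<theta>' = conjugate_sym[OF A v]
  have "\<forall>(a, b)\<in>fst ` prime_events A \<theta>. \<forall>a' b'. (a, a') \<in> \<phi> \<and> (b, b') \<in> \<psi> \<longrightarrow>
      (a', b') \<in> fst ` prime_events A (conjugate \<phi> \<theta> \<psi>)"
    unfolding fst_prime_events mem_conjugate by blast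
  moreover have "Domain \<phi> = Domain (fst ` prime_events A \<theta>)" "Range \<phi> = Domain (fst ` prime_events A (conjugate \<phi> \<theta> \<psi>))"
       "Domain \<psi> = Range (fst ` prime_events A \<theta>)" "Range \<psi> = Range (fst ` prime_events A (conjugate \<phi> \<theta> \<psi>))"
    unfolding fst_prime_events using d \<theta>' by auto
  ultimately show ?thesis
    unfolding hsym_def square_iso_eq_Collect
    using conf_prime_events[OF A \<theta>] conf_prime_events[OF A \<theta>'(1)] \<phi> \<psi> by blast
qed

lemma hsymE:
  fixes A :: "'a essp"
  assumes A: "is_essp A" and P: "\<Phi> \<in> es_sym (tilde A)"
  obtains \<theta> \<phi> \<psi> where "sym_square A \<theta> \<phi> \<psi>" "\<Phi> = square_iso A \<theta> \<phi> \<psi>"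
  using hsym_square_iso[OF A, of \<Phi>] P by auto

lemma prime_at_conjugate_eq:
  assumes A: "is_essp A" and v: "sym_square A \<theta> \<phi> \<psi>" and v2: "sym_square A \<theta>2 \<phi>2 \<psi>2"
    and s: "\<phi> \<subseteq> \<phi>2" "\<theta> \<subseteq> \<theta>2" "\<psi> \<subseteq> \<psi>2" and a: "a \<in> Domain (conjugate \<phi> \<theta> \<psi>)"
  shows "prime_at A (conjugate \<phi> \<theta> \<psi>) a = prime_at A (conjugate \<phi>2 \<theta>2 \<psi>2) a"
  using prime_at_eq_of_subset[OF A conjugate_sym(1)[OF A v] conjugate_sym(1)[OF A v2] conjugate_mono[OF s] a] .

lemma Domain_square_iso:
  assumes v: "sym_square A \<theta> \<phi> \<psi>"
  shows "Domain (square_iso A \<theta> \<phi> \<psi>) = prime_events A \<theta>"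
proof
  show "Domain (square_iso A \<theta> \<phi> \<psi>) \<subseteq> prime_events A \<theta>"
  proof
    fix e assume "e \<in> Domain (square_iso A \<theta> \<phi> \<psi>)"
    then obtain e' where "(e,e') \<in> square_iso A \<theta> \<phi> \<psi>" by blast
    then obtain a b where "(a,b) \<in> \<theta>" "e = ((a,b), prime_at A \<theta> a)" unfolding mem_square_iso by blast
    thus "e \<in> prime_events A \<theta>" using prime_eventsI by metis
  qed
  show "prime_events A \<theta> \<subseteq> Domain (square_iso A \<theta> \<phi> \<psi>)"
  proof
    fix e assume "e \<in> prime_events A \<theta>"
    then obtain a b where ab: "(a,b) \<in> \<theta>" "e = ((a,b), prime_at A \<theta> a)" unfolding mem_prime_events by blast
    then obtain a' where a': "(a,a') \<in> \<phi>" using sym_squareD(4)[OF v] by blast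
    obtain b' where b': "(b,b') \<in> \<psi>" using ab sym_squareD(5)[OF v] by blast
    have "(e, ((a',b'), prime_at A (conjugate \<phi> \<theta> \<psi>) a')) \<in> square_iso A \<theta> \<phi> \<psi>"
      unfolding mem_square_iso using ab a' b' by blast
    thus "e \<in> Domain (square_iso A \<theta> \<phi> \<psi>)" by blast
  qed
qed

lemma Range_square_iso:
  "Range (square_iso A \<theta> \<phi> \<psi>) = prime_events A (conjugate \<phi> \<theta> \<psi>)"
proof
  show "Range (square_iso A \<theta> \<phi> \<psi>) \<subseteq> prime_events A (conjugate \<phi> \<theta> \<psi>)"
  proof
    fix e' assume "e' \<in> Range (square_iso A \<theta> \<phi> \<psi>)"
    then obtain e where "(e,e') \<in> square_iso A \<theta> \<phi> \<psi>" by blast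
    then obtain a b a' b' where m: "(a,b) \<in> \<theta>" "(a,a') \<in> \<phi>" "(b,b') \<in> \<psi>"
      "e' = ((a',b'), prime_at A (conjugate \<phi> \<theta> \<psi>) a')" unfolding mem_square_iso by blast
    have "(a',b') \<in> conjugate \<phi> \<theta> \<psi>" unfolding mem_conjugate using m by blast
    thus "e' \<in> prime_events A (conjugate \<phi> \<theta> \<psi>)" using prime_eventsI m(4) by metis
  qed
  show "prime_events A (conjugate \<phi> \<theta> \<psi>) \<subseteq> Range (square_iso A \<theta> \<phi> \<psi>)"
  proof
    fix e' assume "e' \<in> prime_events A (conjugate \<phi> \<theta> \<psi>)"
    then obtain a' b' where ab: "(a',b') \<in> conjugate \<phi> \<theta> \<psi>" "e' = ((a',b'), prime_at A (conjugate \<phi> \<theta> \<psi>) a')"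
      unfolding mem_prime_events by blast
    then obtain a b where m: "(a,a') \<in> \<phi>" "(a,b) \<in> \<theta>" "(b,b') \<in> \<psi>" unfolding mem_conjugate by blast
    have "(((a,b), prime_at A \<theta> a), e') \<in> square_iso A \<theta> \<phi> \<psi>" unfolding mem_square_iso using ab m by blast
    thus "e' \<in> Range (square_iso A \<theta> \<phi> \<psi>)" by blast
  qed
qed

lemma square_iso_functional:
  assumes A: "is_essp A" and v: "sym_square A \<theta> \<phi> \<psi>"
    and h1: "(e,e1) \<in> square_iso A \<theta> \<phi> \<psi>" and h2: "(e,e2) \<in> square_iso A \<theta> \<phi> \<psi>"
  shows "e1 = e2"
proof -
  obtain a b a' b' where m: "(a,b) \<in> \<theta>" "(a,a') \<in> \<phi>" "(b,b') \<in> \<psi>"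
      "e = ((a,b), prime_at A \<theta> a)" "e1 = ((a',b'), prime_at A (conjugate \<phi> \<theta> \<psi>) a')" using h1 unfolding mem_square_iso by blast
  obtain c d c' d' where n: "(c,d) \<in> \<theta>" "(c,c') \<in> \<phi>" "(d,d') \<in> \<psi>"
      "e = ((c,d), prime_at A \<theta> c)" "e2 = ((c',d'), prime_at A (conjugate \<phi> \<theta> \<psi>) c')" using h2 unfolding mem_square_iso by blast
  have "c = a" "d = b" using m(4) n(4) by auto
  hence "c' = a'" "d' = b'" using sym_functional[OF A sym_squareD(2)[OF v]] sym_functional[OF A sym_squareD(3)[OF v]] m n by blast+
  thus ?thesis using m(5) n(5) by simp
qed

lemma square_iso_injective:
  assumes A: "is_essp A" and v: "sym_square A \<theta> \<phi> \<psi>"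
    and h1: "(e1,e) \<in> square_iso A \<theta> \<phi> \<psi>" and h2: "(e2,e) \<in> square_iso A \<theta> \<phi> \<psi>"
  shows "e1 = e2"
proof -
  obtain a b a' b' where m: "(a,b) \<in> \<theta>" "(a,a') \<in> \<phi>" "(b,b') \<in> \<psi>"
      "e1 = ((a,b), prime_at A \<theta> a)" "e = ((a',b'), prime_at A (conjugate \<phi> \<theta> \<psi>) a')" using h1 unfolding mem_square_iso by blast
  obtain c d c' d' where n: "(c,d) \<in> \<theta>" "(c,c') \<in> \<phi>" "(d,d') \<in> \<psi>"
      "e2 = ((c,d), prime_at A \<theta> c)" "e = ((c',d'), prime_at A (conjugate \<phi> \<theta> \<psi>) c')" using h2 unfolding mem_square_iso by blast
  have "c' = a'" "d' = b'" using m(5) n(5) by auto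
  hence "c = a" "d = b" using sym_injective[OF A sym_squareD(2)[OF v]] sym_injective[OF A sym_squareD(3)[OF v]] m n by blast+
  thus ?thesis using m(4) n(4) by simp
qed

lemma square_iso_bij:
  assumes A: "is_essp A" and v: "sym_square A \<theta> \<phi> \<psi>"
  shows "bij_rel (square_iso A \<theta> \<phi> \<psi>) (prime_events A \<theta>) (prime_events A (conjugate \<phi> \<theta> \<psi>))"
  unfolding bij_rel_def
proof (intro conjI ballI)
  show "square_iso A \<theta> \<phi> \<psi> \<subseteq> prime_events A \<theta> \<times> prime_events A (conjugate \<phi> \<theta> \<psi>)"
    using Domain_square_iso[OF v] Range_square_iso[of A \<theta> \<phi> \<psi>] by auto
  fix e assume "e \<in> prime_events A \<theta>"
  then obtain e' where "(e,e') \<in> square_iso A \<theta> \<phi> \<psi>" using Domain_square_iso[OF v] by blast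
  thus "\<exists>!e'. (e,e') \<in> square_iso A \<theta> \<phi> \<psi>" using square_iso_functional[OF A v] by blast
next
  fix e' assume "e' \<in> prime_events A (conjugate \<phi> \<theta> \<psi>)"
  then obtain e where "(e,e') \<in> square_iso A \<theta> \<phi> \<psi>" using Range_square_iso[of A \<theta> \<phi> \<psi>] by blast
  thus "\<exists>!e. (e,e') \<in> square_iso A \<theta> \<phi> \<psi>" using square_iso_injective[OF A v] by blast
qed

lemma square_iso_mono:
  assumes A: "is_essp A" and v1: "sym_square A \<theta>1 \<phi>1 \<psi>1" and v2: "sym_square A \<theta>2 \<phi>2 \<psi>2"
    and s: "\<theta>1 \<subseteq> \<theta>2" "\<phi>1 \<subseteq> \<phi>2" "\<psi>1 \<subseteq> \<psi>2"
  shows "square_iso A \<theta>1 \<phi>1 \<psi>1 \<subseteq> square_iso A \<theta>2 \<phi>2 \<psi>2"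
proof
  fix q assume q: "q \<in> square_iso A \<theta>1 \<phi>1 \<psi>1"
  obtain e e' where q': "q = (e,e')" by (rule prod.exhaust)
  obtain a b a' b' where m: "(a,b) \<in> \<theta>1" "(a,a') \<in> \<phi>1" "(b,b') \<in> \<psi>1"
    "e = ((a,b), prime_at A \<theta>1 a)" "e' = ((a',b'), prime_at A (conjugate \<phi>1 \<theta>1 \<psi>1) a')"
    using q unfolding q' mem_square_iso by blast
  have "(a',b') \<in> conjugate \<phi>1 \<theta>1 \<psi>1" unfolding mem_conjugate using m by blast
  hence e1: "prime_at A (conjugate \<phi>1 \<theta>1 \<psi>1) a' = prime_at A (conjugate \<phi>2 \<theta>2 \<psi>2) a'"
    using prime_at_conjugate_eq[OF A v1 v2 s(2) s(1) s(3)] by blast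
  have e2: "prime_at A \<theta>1 a = prime_at A \<theta>2 a" using prime_at_eq_of_subset[OF A sym_squareD(1)[OF v1] sym_squareD(1)[OF v2] s(1)] m(1) by blast
  show "q \<in> square_iso A \<theta>2 \<phi>2 \<psi>2" unfolding q' mem_square_iso using m e1 e2 s by blast
qed

lemma square_iso_reflect:
  assumes A: "is_essp A" and v1: "sym_square A \<theta>1 \<phi>1 \<psi>1" and v2: "sym_square A \<theta>2 \<phi>2 \<psi>2"
    and s: "\<theta>1 \<subseteq> \<theta>2" "\<phi>1 \<subseteq> \<phi>2" "\<psi>1 \<subseteq> \<psi>2"
    and m: "(a,b) \<in> \<theta>1" "(a,a') \<in> \<phi>2" "(b,b') \<in> \<psi>2"
  shows "(a,a') \<in> \<phi>1" "(b,b') \<in> \<psi>1"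
    "(((a,b), prime_at A \<theta>2 a), ((a',b'), prime_at A (conjugate \<phi>2 \<theta>2 \<psi>2) a')) \<in> square_iso A \<theta>1 \<phi>1 \<psi>1"
proof -
  note vd1 = sym_squareD[OF v1] and vd2 = sym_squareD[OF v2]
  obtain a1 where a1: "(a,a1) \<in> \<phi>1" using m(1) vd1(4) by blast
  hence "a1 = a'" using sym_functional[OF A vd2(2)] s(2) m(2) by blast
  thus p: "(a,a') \<in> \<phi>1" using a1 by simp
  obtain b1 where b1: "(b,b1) \<in> \<psi>1" using m(1) vd1(5) by blast
  hence "b1 = b'" using sym_functional[OF A vd2(3)] s(3) m(3) by blast
  thus q: "(b,b') \<in> \<psi>1" using b1 by simp
  have "(((a,b), prime_at A \<theta>1 a), ((a',b'), prime_at A (conjugate \<phi>1 \<theta>1 \<psi>1) a')) \<in> square_iso A \<theta>1 \<phi>1 \<psi>1"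
    unfolding mem_square_iso using m(1) p q by blast
  moreover have "(a',b') \<in> conjugate \<phi>1 \<theta>1 \<psi>1" unfolding mem_conjugate using m(1) p q by blast
  hence "prime_at A (conjugate \<phi>1 \<theta>1 \<psi>1) a' = prime_at A (conjugate \<phi>2 \<theta>2 \<psi>2) a'"
    using prime_at_conjugate_eq[OF A v1 v2 s(2) s(1) s(3)] by blast
  moreover have "prime_at A \<theta>1 a = prime_at A \<theta>2 a" using prime_at_eq_of_subset[OF A vd1(1) vd2(1) s(1)] m(1) by blast
  ultimately show "(((a,b), prime_at A \<theta>2 a), ((a',b'), prime_at A (conjugate \<phi>2 \<theta>2 \<psi>2) a')) \<in> square_iso A \<theta>1 \<phi>1 \<psi>1" by simp
qed

lemma square_iso_subset_imp:
  assumes A: "is_essp A" and v: "sym_square A \<theta> \<phi> \<psi>" and v1: "sym_square A \<theta>1 \<phi>1 \<psi>1"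
    and s: "square_iso A \<theta> \<phi> \<psi> \<subseteq> square_iso A \<theta>1 \<phi>1 \<psi>1"
  shows "\<theta> \<subseteq> \<theta>1" "\<phi> \<subseteq> \<phi>1" "\<psi> \<subseteq> \<psi>1"
proof -
  note vd = sym_squareD[OF v]
  have key: "\<And>a b a' b'. (a,b) \<in> \<theta> \<Longrightarrow> (a,a') \<in> \<phi> \<Longrightarrow> (b,b') \<in> \<psi> \<Longrightarrow>
     (a,b) \<in> \<theta>1 \<and> (a,a') \<in> \<phi>1 \<and> (b,b') \<in> \<psi>1"
  proof -
    fix a b a' b' assume m: "(a,b) \<in> \<theta>" "(a,a') \<in> \<phi>" "(b,b') \<in> \<psi>"
    have "(((a,b), prime_at A \<theta> a), ((a',b'), prime_at A (conjugate \<phi> \<theta> \<psi>) a')) \<in> square_iso A \<theta>1 \<phi>1 \<psi>1"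
      using s m unfolding square_iso_def by blast
    then obtain c d c' d' where n: "(c,d) \<in> \<theta>1" "(c,c') \<in> \<phi>1" "(d,d') \<in> \<psi>1"
      "((a,b), prime_at A \<theta> a) = ((c,d), prime_at A \<theta>1 c)" "((a',b'), prime_at A (conjugate \<phi> \<theta> \<psi>) a') = ((c',d'), prime_at A (conjugate \<phi>1 \<theta>1 \<psi>1) c')"
      unfolding mem_square_iso by blast
    thus "(a,b) \<in> \<theta>1 \<and> (a,a') \<in> \<phi>1 \<and> (b,b') \<in> \<psi>1" by auto
  qed
  show "\<theta> \<subseteq> \<theta>1"
  proof
    fix p assume p: "p \<in> \<theta>"
    obtain a b where p': "p = (a,b)" by (rule prod.exhaust)
    obtain a' where "(a,a') \<in> \<phi>" using p p' vd(4) by blast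
    moreover obtain b' where "(b,b') \<in> \<psi>" using p p' vd(5) by blast
    ultimately show "p \<in> \<theta>1" using key p p' by blast
  qed
  show "\<phi> \<subseteq> \<phi>1"
  proof
    fix p assume p: "p \<in> \<phi>"
    obtain a a' where p': "p = (a,a')" by (rule prod.exhaust)
    obtain b where b: "(a,b) \<in> \<theta>" using p p' vd(4) by blast
    moreover obtain b' where "(b,b') \<in> \<psi>" using b vd(5) by blast
    ultimately show "p \<in> \<phi>1" using key p p' by blast
  qed
  show "\<psi> \<subseteq> \<psi>1"
  proof
    fix p assume p: "p \<in> \<psi>"
    obtain b b' where p': "p = (b,b')" by (rule prod.exhaust)
    obtain a where a: "(a,b) \<in> \<theta>" using p p' vd(5) by blast
    moreover obtain a' where "(a,a') \<in> \<phi>" using a vd(4) by blast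
    ultimately show "p \<in> \<psi>1" using key p p' by blast
  qed
qed

lemma square_iso_Un:
  assumes A: "is_essp A" and v1: "sym_square A \<theta>1 \<phi>1 \<psi>1" and v2: "sym_square A \<theta>2 \<phi>2 \<psi>2"
    and v12: "sym_square A (\<theta>1 \<union> \<theta>2) (\<phi>1 \<union> \<phi>2) (\<psi>1 \<union> \<psi>2)"
  shows "square_iso A \<theta>1 \<phi>1 \<psi>1 \<union> square_iso A \<theta>2 \<phi>2 \<psi>2 = square_iso A (\<theta>1 \<union> \<theta>2) (\<phi>1 \<union> \<phi>2) (\<psi>1 \<union> \<psi>2)"
proof
  show "square_iso A \<theta>1 \<phi>1 \<psi>1 \<union> square_iso A \<theta>2 \<phi>2 \<psi>2 \<subseteq> square_iso A (\<theta>1 \<union> \<theta>2) (\<phi>1 \<union> \<phi>2) (\<psi>1 \<union> \<psi>2)"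
    using square_iso_mono[OF A v1 v12] square_iso_mono[OF A v2 v12] by blast
  show "square_iso A (\<theta>1 \<union> \<theta>2) (\<phi>1 \<union> \<phi>2) (\<psi>1 \<union> \<psi>2) \<subseteq> square_iso A \<theta>1 \<phi>1 \<psi>1 \<union> square_iso A \<theta>2 \<phi>2 \<psi>2"
  proof
    fix q assume q: "q \<in> square_iso A (\<theta>1 \<union> \<theta>2) (\<phi>1 \<union> \<phi>2) (\<psi>1 \<union> \<psi>2)"
    obtain e e' where q': "q = (e,e')" by (rule prod.exhaust)
    obtain a b a' b' where m: "(a,b) \<in> \<theta>1 \<union> \<theta>2" "(a,a') \<in> \<phi>1 \<union> \<phi>2" "(b,b') \<in> \<psi>1 \<union> \<psi>2"
      "e = ((a,b), prime_at A (\<theta>1 \<union> \<theta>2) a)" "e' = ((a',b'), prime_at A (conjugate (\<phi>1 \<union> \<phi>2) (\<theta>1 \<union> \<theta>2) (\<psi>1 \<union> \<psi>2)) a')"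
      using q unfolding q' mem_square_iso by blast
    show "q \<in> square_iso A \<theta>1 \<phi>1 \<psi>1 \<union> square_iso A \<theta>2 \<phi>2 \<psi>2"
    proof (cases "(a,b) \<in> \<theta>1")
      case True
      have "q \<in> square_iso A \<theta>1 \<phi>1 \<psi>1" unfolding q' m(4,5)
        using square_iso_reflect(3)[OF A v1 v12 _ _ _ True m(2,3)] by blast
      thus ?thesis by blast
    next
      case False
      hence "(a,b) \<in> \<theta>2" using m(1) by blast
      hence "q \<in> square_iso A \<theta>2 \<phi>2 \<psi>2" unfolding q' m(4,5)
        using square_iso_reflect(3)[OF A v2 v12 _ _ _ _ m(2,3)] by blast
      thus ?thesis by blast
    qed
  qed
qed

lemma square_iso_insert_base:
  assumes v2: "sym_square A \<theta>2 \<phi>2 \<psi>2" and v: "sym_square A \<theta> \<phi> \<psi>"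
    and eq: "insert q (square_iso A \<theta> \<phi> \<psi>) = square_iso A \<theta>2 \<phi>2 \<psi>2"
  shows "\<theta>2 = insert (fst (fst q)) \<theta>"
proof -
  have "Domain (square_iso A \<theta>2 \<phi>2 \<psi>2) = insert (fst q) (prime_events A \<theta>)"
    unfolding eq[symmetric] using Domain_square_iso[OF v] by (metis Domain_insert prod.collapse)
  hence "prime_events A \<theta>2 = insert (fst q) (prime_events A \<theta>)" using Domain_square_iso[OF v2] by simp
  hence "fst ` prime_events A \<theta>2 = insert (fst (fst q)) (fst ` prime_events A \<theta>)" by simp
  thus ?thesis by simp
qed

lemma square_iso_insert_cases:
  assumes A: "is_essp A" and v: "sym_square A \<theta> \<phi> \<psi>" and v1: "sym_square A \<theta>1 \<phi>1 \<psi>1"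
    and eq: "insert q (square_iso A \<theta> \<phi> \<psi>) = square_iso A \<theta>1 \<phi>1 \<psi>1" and q: "q \<notin> square_iso A \<theta> \<phi> \<psi>"
  obtains a b a' b' where "\<theta>1 = insert (a, b) \<theta>" "\<phi>1 = insert (a, a') \<phi>" "\<psi>1 = insert (b, b') \<psi>"
    "a \<notin> Domain \<theta>" "b \<notin> Range \<theta>"
    "q = (((a, b), prime_at A \<theta>1 a), ((a', b'), prime_at A (conjugate \<phi>1 \<theta>1 \<psi>1) a'))"
proof -
  note vd = sym_squareD[OF v] and vd1 = sym_squareD[OF v1]
  have s: "square_iso A \<theta> \<phi> \<psi> \<subseteq> square_iso A \<theta>1 \<phi>1 \<psi>1" using eq by blast
  note ss = square_iso_subset_imp[OF A v v1 s]
  have "q \<in> square_iso A \<theta>1 \<phi>1 \<psi>1" using eq by blast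
  then obtain a b a' b' where m: "(a, b) \<in> \<theta>1" "(a, a') \<in> \<phi>1" "(b, b') \<in> \<psi>1"
    "q = (((a, b), prime_at A \<theta>1 a), ((a', b'), prime_at A (conjugate \<phi>1 \<theta>1 \<psi>1) a'))"
    by (metis mem_square_iso prod.collapse)
  have \<theta>1: "\<theta>1 = insert (a, b) \<theta>" using square_iso_insert_base[OF v1 v eq] m(4) by simp
  have "(a, b) \<notin> \<theta>"
    using q m square_iso_reflect(3)[OF A v v1 ss _ m(2,3)] by auto
  hence a: "a \<notin> Domain \<theta>" and b: "b \<notin> Range \<theta>"
    using sym_functional[OF A vd1(1)] sym_injective[OF A vd1(1)] m(1) ss(1) by blast+
  have "\<phi>1 = insert (a, a') \<phi>" using sym_eq_insert[OF A vd1(2) ss(2) _ m(2)] vd1(4) vd(4) \<theta>1 by simp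
  moreover have "\<psi>1 = insert (b, b') \<psi>" using sym_eq_insert[OF A vd1(3) ss(3) _ m(3)] vd1(5) vd(5) \<theta>1 by simp
  ultimately show ?thesis using that \<theta>1 a b m(4) by blast
qed

lemma square_iso_insert:
  assumes A: "is_essp A" and v: "sym_square A \<theta> \<phi> \<psi>"
    and v1: "sym_square A (insert (a, b) \<theta>) (insert (a, a') \<phi>) (insert (b, b') \<psi>)"
    and a: "a \<notin> Domain \<theta>" and b: "b \<notin> Range \<theta>"
  shows "square_iso A (insert (a, b) \<theta>) (insert (a, a') \<phi>) (insert (b, b') \<psi>) =
    insert (((a, b), prime_at A (insert (a, b) \<theta>) a),
            ((a', b'), prime_at A (conjugate (insert (a, a') \<phi>) (insert (a, b) \<theta>) (insert (b, b') \<psi>)) a'))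
      (square_iso A \<theta> \<phi> \<psi>)" (is "?L = insert ?e _")
proof
  note vd = sym_squareD[OF v]
  have sub: "\<theta> \<subseteq> insert (a, b) \<theta>" "\<phi> \<subseteq> insert (a, a') \<phi>" "\<psi> \<subseteq> insert (b, b') \<psi>" by auto
  have "?e \<in> ?L" unfolding mem_square_iso by blast
  thus "insert ?e (square_iso A \<theta> \<phi> \<psi>) \<subseteq> ?L" using square_iso_mono[OF A v v1 sub] by blast
  show "?L \<subseteq> insert ?e (square_iso A \<theta> \<phi> \<psi>)"
  proof
    fix q assume "q \<in> ?L"
    then obtain c d c' d' where m: "(c, d) \<in> insert (a, b) \<theta>" "(c, c') \<in> insert (a, a') \<phi>" "(d, d') \<in> insert (b, b') \<psi>"
      "q = (((c, d), prime_at A (insert (a, b) \<theta>) c),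
            ((c', d'), prime_at A (conjugate (insert (a, a') \<phi>) (insert (a, b) \<theta>) (insert (b, b') \<psi>)) c'))"
      by (metis mem_square_iso prod.collapse)
    show "q \<in> insert ?e (square_iso A \<theta> \<phi> \<psi>)"
    proof (cases "(c, d) = (a, b)")
      case True
      hence "c' = a'" "d' = b'" using m(2,3) a b vd(4,5) by blast+
      thus ?thesis using True m(4) by simp
    next
      case False
      hence "(c, d) \<in> \<theta>" using m(1) by blast
      thus ?thesis using square_iso_reflect(3)[OF A v v1 sub _ m(2,3)] m(4) by simp
    qed
  qed
qed

lemma square_insert_pol:
  assumes A: "is_essp A" and v: "sym_square A (insert (a, b) \<theta>) (insert (a, a') \<phi>) (insert (b, b') \<psi>)"
  shows "es_pol A b = es_pol A a" "es_pol A b' = es_pol A a'"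
proof -
  have "(a', b') \<in> conjugate (insert (a, a') \<phi>) (insert (a, b) \<theta>) (insert (b, b') \<psi>)"
    unfolding mem_conjugate by blast
  thus "es_pol A b = es_pol A a" "es_pol A b' = es_pol A a'"
    using sym_pol[OF A sym_squareD(1)[OF v]] sym_pol[OF A conjugate_sym(1)[OF A v]] by (metis insertI1)+
qed

lemma square_iso_pol:
  fixes A :: "'a essp"
  assumes A: "is_essp A" and v: "sym_square A \<theta> \<phi> \<psi>" and q: "(e,e') \<in> square_iso A \<theta> \<phi> \<psi>"
  shows "es_pol A (fst (fst e)) = es_pol A (fst (fst e'))"
proof -
  obtain a b a' b' where m: "(a,a') \<in> \<phi>"
    "e = ((a,b), prime_at A \<theta> a)" "e' = ((a',b'), prime_at A (conjugate \<phi> \<theta> \<psi>) a')"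
    using q unfolding mem_square_iso by blast
  thus ?thesis using sym_pol[OF A sym_squareD(2)[OF v] m(1)] by simp
qed

section \<open>The symmetry of the symmetry is an isomorphism family\<close>

lemma Domain_restrict: "x \<subseteq> Domain r \<Longrightarrow> Domain (r \<inter> (x \<times> UNIV)) = x"
  by blast

lemma Id_on_prime_events_hsym:
  fixes A :: "'a essp"
  assumes A: "is_essp A" and th: "\<theta> \<in> es_sym A"
  shows "Id_on (prime_events A \<theta>) \<in> hsym A"
proof -
  have v: "sym_square A \<theta> (Id_on (Domain \<theta>)) (Id_on (Range \<theta>))" unfolding sym_square_def
    using th sym_Id_on[OF A sym_conf_Domain[OF A th]] sym_Id_on[OF A sym_conf_Range[OF A th]] by auto
  have c: "conjugate (Id_on (Domain \<theta>)) \<theta> (Id_on (Range \<theta>)) = \<theta>" by (rule conjugate_Id) auto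
  have "square_iso A \<theta> (Id_on (Domain \<theta>)) (Id_on (Range \<theta>)) = Id_on (prime_events A \<theta>)"
    unfolding square_iso_def c prime_events_def by auto
  thus ?thesis using square_iso_hsym[OF A v] by simp
qed

lemma conjugate_converse_cancel:
  assumes A: "is_essp A" and v: "sym_square A \<theta> \<phi> \<psi>"
  shows "conjugate (\<phi>\<inverse>) (conjugate \<phi> \<theta> \<psi>) (\<psi>\<inverse>) = \<theta>"
proof
  note vd = sym_squareD[OF v]
  show "conjugate (\<phi>\<inverse>) (conjugate \<phi> \<theta> \<psi>) (\<psi>\<inverse>) \<subseteq> \<theta>"
  proof
    fix p assume p: "p \<in> conjugate (\<phi>\<inverse>) (conjugate \<phi> \<theta> \<psi>) (\<psi>\<inverse>)"
    obtain x y where p': "p = (x,y)" by (rule prod.exhaust)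
    obtain x' y' where "(x,x') \<in> \<phi>" "(x',y') \<in> conjugate \<phi> \<theta> \<psi>" "(y,y') \<in> \<psi>"
      using p unfolding p' conjugate_def by blast
    moreover then obtain a b where "(a,x') \<in> \<phi>" "(a,b) \<in> \<theta>" "(b,y') \<in> \<psi>" unfolding mem_conjugate by blast
    ultimately have "a = x" "b = y" using sym_injective[OF A vd(2)] sym_injective[OF A vd(3)] by blast+
    thus "p \<in> \<theta>" using p' \<open>(a,b) \<in> \<theta>\<close> by simp
  qed
  show "\<theta> \<subseteq> conjugate (\<phi>\<inverse>) (conjugate \<phi> \<theta> \<psi>) (\<psi>\<inverse>)"
  proof
    fix p assume p: "p \<in> \<theta>"
    obtain x y where p': "p = (x,y)" by (rule prod.exhaust)
    obtain x' where x': "(x,x') \<in> \<phi>" using p p' vd(4) by blast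
    obtain y' where y': "(y,y') \<in> \<psi>" using p p' vd(5) by blast
    have "(x',y') \<in> conjugate \<phi> \<theta> \<psi>" unfolding mem_conjugate using x' y' p p' by blast
    thus "p \<in> conjugate (\<phi>\<inverse>) (conjugate \<phi> \<theta> \<psi>) (\<psi>\<inverse>)" unfolding p' conjugate_def using x' y' by blast
  qed
qed

lemma converse_square_iso:
  fixes A :: "'a essp"
  assumes A: "is_essp A" and v: "sym_square A \<theta> \<phi> \<psi>"
  shows "(square_iso A \<theta> \<phi> \<psi>)\<inverse> = square_iso A (conjugate \<phi> \<theta> \<psi>) (\<phi>\<inverse>) (\<psi>\<inverse>)" "sym_square A (conjugate \<phi> \<theta> \<psi>) (\<phi>\<inverse>) (\<psi>\<inverse>)"
proof -
  note vd = sym_squareD[OF v]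
  note cs = conjugate_sym[OF A v]
  show v2: "sym_square A (conjugate \<phi> \<theta> \<psi>) (\<phi>\<inverse>) (\<psi>\<inverse>)" unfolding sym_square_def
    using cs sym_converse[OF A vd(2)] sym_converse[OF A vd(3)] by auto
  note cc = conjugate_converse_cancel[OF A v]
  show "(square_iso A \<theta> \<phi> \<psi>)\<inverse> = square_iso A (conjugate \<phi> \<theta> \<psi>) (\<phi>\<inverse>) (\<psi>\<inverse>)"
  proof
    show "(square_iso A \<theta> \<phi> \<psi>)\<inverse> \<subseteq> square_iso A (conjugate \<phi> \<theta> \<psi>) (\<phi>\<inverse>) (\<psi>\<inverse>)"
    proof
      fix q assume q: "q \<in> (square_iso A \<theta> \<phi> \<psi>)\<inverse>"
      obtain e' e where q': "q = (e',e)" by (rule prod.exhaust)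
      obtain a b a' b' where m: "(a,b) \<in> \<theta>" "(a,a') \<in> \<phi>" "(b,b') \<in> \<psi>"
        "e = ((a,b), prime_at A \<theta> a)" "e' = ((a',b'), prime_at A (conjugate \<phi> \<theta> \<psi>) a')"
        using q unfolding q' converse_iff mem_square_iso by blast
      have "(a',b') \<in> conjugate \<phi> \<theta> \<psi>" unfolding mem_conjugate using m by blast
      thus "q \<in> square_iso A (conjugate \<phi> \<theta> \<psi>) (\<phi>\<inverse>) (\<psi>\<inverse>)" unfolding q' mem_square_iso cc using m by blast
    qed
    show "square_iso A (conjugate \<phi> \<theta> \<psi>) (\<phi>\<inverse>) (\<psi>\<inverse>) \<subseteq> (square_iso A \<theta> \<phi> \<psi>)\<inverse>"
    proof
      fix q assume q: "q \<in> square_iso A (conjugate \<phi> \<theta> \<psi>) (\<phi>\<inverse>) (\<psi>\<inverse>)"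
      obtain e' e where q': "q = (e',e)" by (rule prod.exhaust)
      obtain a' b' a b where m: "(a',b') \<in> conjugate \<phi> \<theta> \<psi>" "(a',a) \<in> \<phi>\<inverse>" "(b',b) \<in> \<psi>\<inverse>"
        "e' = ((a',b'), prime_at A (conjugate \<phi> \<theta> \<psi>) a')" "e = ((a,b), prime_at A \<theta> a)"
        using q unfolding q' mem_square_iso cc by blast
      obtain x y where n: "(x,a') \<in> \<phi>" "(x,y) \<in> \<theta>" "(y,b') \<in> \<psi>" using m(1) unfolding mem_conjugate by blast
      have "x = a" "y = b" using sym_injective[OF A vd(2)] sym_injective[OF A vd(3)] m(2,3) n by auto
      thus "q \<in> (square_iso A \<theta> \<phi> \<psi>)\<inverse>" unfolding q' converse_iff mem_square_iso using m n by blast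
    qed
  qed
qed

lemma relcomp_square_iso:
  fixes A :: "'a essp"
  assumes A: "is_essp A" and v: "sym_square A \<theta> \<phi> \<psi>" and v2: "sym_square A (conjugate \<phi> \<theta> \<psi>) \<phi>2 \<psi>2"
  shows "square_iso A \<theta> \<phi> \<psi> O square_iso A (conjugate \<phi> \<theta> \<psi>) \<phi>2 \<psi>2 = square_iso A \<theta> (\<phi> O \<phi>2) (\<psi> O \<psi>2)"
    "sym_square A \<theta> (\<phi> O \<phi>2) (\<psi> O \<psi>2)"
proof -
  note vd = sym_squareD[OF v] and vd2 = sym_squareD[OF v2]
  note cs = conjugate_sym[OF A v]
  have r1: "Range \<phi> = Domain \<phi>2" using cs(2) vd2(4) by simp
  have r2: "Range \<psi> = Domain \<psi>2" using cs(3) vd2(5) by simp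
  show v3: "sym_square A \<theta> (\<phi> O \<phi>2) (\<psi> O \<psi>2)" unfolding sym_square_def
    using vd sym_relcomp[OF A vd(2) vd2(2) r1] sym_relcomp[OF A vd(3) vd2(3) r2] r1 r2
    by (auto, blast+)
  have cc: "conjugate (\<phi> O \<phi>2) \<theta> (\<psi> O \<psi>2) = conjugate \<phi>2 (conjugate \<phi> \<theta> \<psi>) \<psi>2"
    unfolding conjugate_def by (simp add: converse_relcomp O_assoc)
  show "square_iso A \<theta> \<phi> \<psi> O square_iso A (conjugate \<phi> \<theta> \<psi>) \<phi>2 \<psi>2 = square_iso A \<theta> (\<phi> O \<phi>2) (\<psi> O \<psi>2)"
  proof
    show "square_iso A \<theta> \<phi> \<psi> O square_iso A (conjugate \<phi> \<theta> \<psi>) \<phi>2 \<psi>2 \<subseteq> square_iso A \<theta> (\<phi> O \<phi>2) (\<psi> O \<psi>2)"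
    proof
      fix q assume q: "q \<in> square_iso A \<theta> \<phi> \<psi> O square_iso A (conjugate \<phi> \<theta> \<psi>) \<phi>2 \<psi>2"
      obtain e e'' where q': "q = (e,e'')" by (rule prod.exhaust)
      obtain e' where h1: "(e,e') \<in> square_iso A \<theta> \<phi> \<psi>" and h2: "(e',e'') \<in> square_iso A (conjugate \<phi> \<theta> \<psi>) \<phi>2 \<psi>2"
        using q q' by blast
      obtain a b a' b' where m: "(a,b) \<in> \<theta>" "(a,a') \<in> \<phi>" "(b,b') \<in> \<psi>"
        "e = ((a,b), prime_at A \<theta> a)" "e' = ((a',b'), prime_at A (conjugate \<phi> \<theta> \<psi>) a')" using h1 unfolding mem_square_iso by blast
      obtain c d c' d' where n: "(c,c') \<in> \<phi>2" "(d,d') \<in> \<psi>2"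
        "e' = ((c,d), prime_at A (conjugate \<phi> \<theta> \<psi>) c)" "e'' = ((c',d'), prime_at A (conjugate \<phi>2 (conjugate \<phi> \<theta> \<psi>) \<psi>2) c')"
        using h2 unfolding mem_square_iso by blast
      have "c = a'" "d = b'" using m(5) n(3) by auto
      thus "q \<in> square_iso A \<theta> (\<phi> O \<phi>2) (\<psi> O \<psi>2)" unfolding q' mem_square_iso cc using m n by blast
    qed
    show "square_iso A \<theta> (\<phi> O \<phi>2) (\<psi> O \<psi>2) \<subseteq> square_iso A \<theta> \<phi> \<psi> O square_iso A (conjugate \<phi> \<theta> \<psi>) \<phi>2 \<psi>2"
    proof
      fix q assume q: "q \<in> square_iso A \<theta> (\<phi> O \<phi>2) (\<psi> O \<psi>2)"
      obtain e e'' where q': "q = (e,e'')" by (rule prod.exhaust)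
      obtain a b a'' b'' where m: "(a,b) \<in> \<theta>" "(a,a'') \<in> \<phi> O \<phi>2" "(b,b'') \<in> \<psi> O \<psi>2"
        "e = ((a,b), prime_at A \<theta> a)" "e'' = ((a'',b''), prime_at A (conjugate \<phi>2 (conjugate \<phi> \<theta> \<psi>) \<psi>2) a'')"
        using q unfolding q' mem_square_iso cc by blast
      obtain a' where a': "(a,a') \<in> \<phi>" "(a',a'') \<in> \<phi>2" using m(2) by blast
      obtain b' where b': "(b,b') \<in> \<psi>" "(b',b'') \<in> \<psi>2" using m(3) by blast
      have "(a',b') \<in> conjugate \<phi> \<theta> \<psi>" unfolding mem_conjugate using a' b' m(1) by blast
      define e' where "e' = ((a',b'), prime_at A (conjugate \<phi> \<theta> \<psi>) a')"
      have "(e,e') \<in> square_iso A \<theta> \<phi> \<psi>" unfolding mem_square_iso e'_def using m a' b' by blast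
      moreover have "(e',e'') \<in> square_iso A (conjugate \<phi> \<theta> \<psi>) \<phi>2 \<psi>2" unfolding mem_square_iso e'_def
        using m(5) a' b' \<open>(a',b') \<in> conjugate \<phi> \<theta> \<psi>\<close> by blast
      ultimately show "q \<in> square_iso A \<theta> \<phi> \<psi> O square_iso A (conjugate \<phi> \<theta> \<psi>) \<phi>2 \<psi>2" unfolding q' by blast
    qed
  qed
qed

lemma square_iso_restrict_hsym:
  fixes A :: "'a essp"
  assumes A: "is_essp A" and v: "sym_square A \<theta> \<phi> \<psi>" and th0: "\<theta>0 \<in> es_sym A" and sub: "\<theta>0 \<subseteq> \<theta>"
  shows "square_iso A \<theta> \<phi> \<psi> \<inter> (prime_events A \<theta>0 \<times> UNIV) \<in> hsym A"
proof -
  note vd = sym_squareD[OF v]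
  define \<phi>0 where "\<phi>0 = \<phi> \<inter> (Domain \<theta>0 \<times> UNIV)"
  define \<psi>0 where "\<psi>0 = \<psi> \<inter> (Range \<theta>0 \<times> UNIV)"
  have s1: "Domain \<theta>0 \<subseteq> Domain \<phi>" using sub vd(4) by blast
  have s2: "Range \<theta>0 \<subseteq> Domain \<psi>" using sub vd(5) by blast
  have p0: "\<phi>0 \<in> es_sym A" unfolding \<phi>0_def using sym_restrict[OF A vd(2) sym_conf_Domain[OF A th0] s1] .
  have q0: "\<psi>0 \<in> es_sym A" unfolding \<psi>0_def using sym_restrict[OF A vd(3) sym_conf_Range[OF A th0] s2] .
  have v0: "sym_square A \<theta>0 \<phi>0 \<psi>0" unfolding sym_square_def
    using th0 p0 q0 Domain_restrict[OF s1] Domain_restrict[OF s2] unfolding \<phi>0_def \<psi>0_def by auto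
  have sp: "\<phi>0 \<subseteq> \<phi>" "\<psi>0 \<subseteq> \<psi>" unfolding \<phi>0_def \<psi>0_def by auto
  have eq: "square_iso A \<theta> \<phi> \<psi> \<inter> (prime_events A \<theta>0 \<times> UNIV) = square_iso A \<theta>0 \<phi>0 \<psi>0"
  proof
    show "square_iso A \<theta> \<phi> \<psi> \<inter> (prime_events A \<theta>0 \<times> UNIV) \<subseteq> square_iso A \<theta>0 \<phi>0 \<psi>0"
    proof
      fix q assume q: "q \<in> square_iso A \<theta> \<phi> \<psi> \<inter> (prime_events A \<theta>0 \<times> UNIV)"
      obtain e e' where q': "q = (e,e')" by (rule prod.exhaust)
      obtain a b a' b' where m: "(a,b) \<in> \<theta>" "(a,a') \<in> \<phi>" "(b,b') \<in> \<psi>"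
        "e = ((a,b), prime_at A \<theta> a)" "e' = ((a',b'), prime_at A (conjugate \<phi> \<theta> \<psi>) a')"
        using q unfolding q' by (auto simp: mem_square_iso)
      have "e \<in> prime_events A \<theta>0" using q q' by auto
      then obtain c d where n: "(c,d) \<in> \<theta>0" "e = ((c,d), prime_at A \<theta>0 c)" unfolding mem_prime_events by blast
      have cd: "c = a" "d = b" using m(4) n(2) by auto
      have m2: "(a,a') \<in> \<phi>0" "(b,b') \<in> \<psi>0" unfolding \<phi>0_def \<psi>0_def using m n cd by auto
      have "(a',b') \<in> conjugate \<phi>0 \<theta>0 \<psi>0" unfolding mem_conjugate using m2 n(1) cd by blast
      hence "prime_at A (conjugate \<phi>0 \<theta>0 \<psi>0) a' = prime_at A (conjugate \<phi> \<theta> \<psi>) a'"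
        using prime_at_conjugate_eq[OF A v0 v sp(1) sub sp(2)] by blast
      thus "q \<in> square_iso A \<theta>0 \<phi>0 \<psi>0" unfolding q' mem_square_iso using m2 n cd m(5) by auto
    qed
    show "square_iso A \<theta>0 \<phi>0 \<psi>0 \<subseteq> square_iso A \<theta> \<phi> \<psi> \<inter> (prime_events A \<theta>0 \<times> UNIV)"
    proof
      fix q assume q: "q \<in> square_iso A \<theta>0 \<phi>0 \<psi>0"
      obtain e e' where q': "q = (e,e')" by (rule prod.exhaust)
      obtain a b a' b' where m: "(a,b) \<in> \<theta>0" "(a,a') \<in> \<phi>0" "(b,b') \<in> \<psi>0"
        "e = ((a,b), prime_at A \<theta>0 a)" "e' = ((a',b'), prime_at A (conjugate \<phi>0 \<theta>0 \<psi>0) a')"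
        using q unfolding q' mem_square_iso by blast
      have "(a',b') \<in> conjugate \<phi>0 \<theta>0 \<psi>0" unfolding mem_conjugate using m by blast
      hence e1: "prime_at A (conjugate \<phi>0 \<theta>0 \<psi>0) a' = prime_at A (conjugate \<phi> \<theta> \<psi>) a'"
        using prime_at_conjugate_eq[OF A v0 v sp(1) sub sp(2)] by blast
      have e2: "prime_at A \<theta>0 a = prime_at A \<theta> a" using prime_at_eq_of_subset[OF A th0 vd(1) sub] m(1) by blast
      have "e \<in> prime_events A \<theta>0" using m(1,4) prime_eventsI by metis
      moreover have "(e,e') \<in> square_iso A \<theta> \<phi> \<psi>" unfolding mem_square_iso
        using m e1 e2 sub sp by blast
      ultimately show "q \<in> square_iso A \<theta> \<phi> \<psi> \<inter> (prime_events A \<theta>0 \<times> UNIV)" unfolding q' by blast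
    qed
  qed
  show ?thesis unfolding eq using square_iso_hsym[OF A v0] .
qed

lemma square_iso_extend_hsym:
  fixes A :: "'a essp"
  assumes A: "is_essp A" and v: "sym_square A \<theta> \<phi> \<psi>" and th2: "\<theta>2 \<in> es_sym A" and sub: "\<theta> \<subseteq> \<theta>2"
  shows "\<exists>\<Phi>\<in>hsym A. square_iso A \<theta> \<phi> \<psi> \<subseteq> \<Phi> \<and> Domain \<Phi> = prime_events A \<theta>2"
proof -
  note vd = sym_squareD[OF v]
  have s1: "Domain \<phi> \<subseteq> Domain \<theta>2" using sub vd(4) by auto
  have s2: "Domain \<psi> \<subseteq> Range \<theta>2" using sub vd(5) by auto
  obtain \<phi>2 where p2: "\<phi>2 \<in> es_sym A" "\<phi> \<subseteq> \<phi>2" "Domain \<phi>2 = Domain \<theta>2"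
    using sym_extend[OF A vd(2) sym_conf_Domain[OF A th2] s1] by blast
  obtain \<psi>2 where q2: "\<psi>2 \<in> es_sym A" "\<psi> \<subseteq> \<psi>2" "Domain \<psi>2 = Range \<theta>2"
    using sym_extend[OF A vd(3) sym_conf_Range[OF A th2] s2] by blast
  have v2: "sym_square A \<theta>2 \<phi>2 \<psi>2" unfolding sym_square_def using th2 p2 q2 by auto
  have "square_iso A \<theta> \<phi> \<psi> \<subseteq> square_iso A \<theta>2 \<phi>2 \<psi>2"
  proof
    fix q assume q: "q \<in> square_iso A \<theta> \<phi> \<psi>"
    obtain e e' where q': "q = (e,e')" by (rule prod.exhaust)
    obtain a b a' b' where m: "(a,b) \<in> \<theta>" "(a,a') \<in> \<phi>" "(b,b') \<in> \<psi>"
      "e = ((a,b), prime_at A \<theta> a)" "e' = ((a',b'), prime_at A (conjugate \<phi> \<theta> \<psi>) a')"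
      using q unfolding q' mem_square_iso by blast
    have "(a',b') \<in> conjugate \<phi> \<theta> \<psi>" unfolding mem_conjugate using m by blast
    hence e1: "prime_at A (conjugate \<phi> \<theta> \<psi>) a' = prime_at A (conjugate \<phi>2 \<theta>2 \<psi>2) a'"
      using prime_at_conjugate_eq[OF A v v2 p2(2) sub q2(2)] by blast
    have e2: "prime_at A \<theta> a = prime_at A \<theta>2 a" using prime_at_eq_of_subset[OF A vd(1) th2 sub] m(1) by blast
    show "q \<in> square_iso A \<theta>2 \<phi>2 \<psi>2" unfolding q' mem_square_iso using m e1 e2 sub p2(2) q2(2) by blast
  qed
  moreover have "Domain (square_iso A \<theta>2 \<phi>2 \<psi>2) = prime_events A \<theta>2" using Domain_square_iso[OF v2] .
  ultimately show ?thesis using square_iso_hsym[OF A v2] by blast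
qed

lemma tilde_sym_bij:
  fixes A :: "'a essp"
  assumes A: "is_essp A"
  shows "\<forall>\<Phi>\<in>es_sym (tilde A). \<exists>x y. conf (tilde A) x \<and> conf (tilde A) y \<and> bij_rel \<Phi> x y"
proof
  fix \<Phi> assume "\<Phi> \<in> es_sym (tilde A)"
  then obtain \<theta> \<phi> \<psi> where v: "sym_square A \<theta> \<phi> \<psi>" and P: "\<Phi> = square_iso A \<theta> \<phi> \<psi>" using hsymE[OF A] by metis
  have "conf (tilde A) (prime_events A \<theta>)" unfolding conf_tilde_eq using conf_prime_events[OF A sym_squareD(1)[OF v]] .
  moreover have "conf (tilde A) (prime_events A (conjugate \<phi> \<theta> \<psi>))" unfolding conf_tilde_eq using conf_prime_events[OF A conjugate_sym(1)[OF A v]] .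
  ultimately show "\<exists>x y. conf (tilde A) x \<and> conf (tilde A) y \<and> bij_rel \<Phi> x y" using square_iso_bij[OF A v] P by blast
qed

lemma tilde_sym_Id_on:
  fixes A :: "'a essp"
  assumes A: "is_essp A"
  shows "\<forall>x. conf (tilde A) x \<longrightarrow> Id_on x \<in> es_sym (tilde A)"
proof (intro allI impI)
  fix X assume "conf (tilde A) X"
  then obtain \<theta> where "\<theta> \<in> es_sym A" "X = prime_events A \<theta>" using conf_tildeE[OF A] by blast
  thus "Id_on X \<in> es_sym (tilde A)" using Id_on_prime_events_hsym[OF A] by simp
qed

lemma tilde_sym_converse:
  fixes A :: "'a essp"
  assumes A: "is_essp A"
  shows "\<forall>\<Phi>\<in>es_sym (tilde A). \<Phi>\<inverse> \<in> es_sym (tilde A)"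
proof
  fix \<Phi> assume "\<Phi> \<in> es_sym (tilde A)"
  then obtain \<theta> \<phi> \<psi> where v: "sym_square A \<theta> \<phi> \<psi>" and P: "\<Phi> = square_iso A \<theta> \<phi> \<psi>" using hsymE[OF A] by metis
  show "\<Phi>\<inverse> \<in> es_sym (tilde A)" using converse_square_iso[OF A v] square_iso_hsym[OF A] P by simp
qed

lemma tilde_sym_relcomp:
  fixes A :: "'a essp"
  assumes A: "is_essp A"
  shows "\<forall>\<Phi>\<in>es_sym (tilde A). \<forall>\<Psi>\<in>es_sym (tilde A). Range \<Phi> = Domain \<Psi> \<longrightarrow> \<Phi> O \<Psi> \<in> es_sym (tilde A)"
proof (intro ballI impI)
  fix \<Phi> \<Psi> assume "\<Phi> \<in> es_sym (tilde A)" "\<Psi> \<in> es_sym (tilde A)" and r: "Range \<Phi> = Domain \<Psi>"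
  obtain \<theta> \<phi> \<psi> where v: "sym_square A \<theta> \<phi> \<psi>" and P: "\<Phi> = square_iso A \<theta> \<phi> \<psi>" using hsymE[OF A \<open>\<Phi> \<in> _\<close>] by metis
  obtain \<theta>2 \<phi>2 \<psi>2 where v2: "sym_square A \<theta>2 \<phi>2 \<psi>2" and Q: "\<Psi> = square_iso A \<theta>2 \<phi>2 \<psi>2" using hsymE[OF A \<open>\<Psi> \<in> _\<close>] by metis
  have "prime_events A (conjugate \<phi> \<theta> \<psi>) = prime_events A \<theta>2" using r P Q Range_square_iso Domain_square_iso[OF v2] by metis
  hence t2: "\<theta>2 = conjugate \<phi> \<theta> \<psi>" using prime_events_inj by metis
  show "\<Phi> O \<Psi> \<in> es_sym (tilde A)" using relcomp_square_iso[OF A v v2[unfolded t2]] square_iso_hsym[OF A] P Q t2 by simp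
qed

lemma tilde_sym_restrict:
  fixes A :: "'a essp"
  assumes A: "is_essp A"
  shows "\<forall>\<Phi>\<in>es_sym (tilde A). \<forall>x'. conf (tilde A) x' \<and> x' \<subseteq> Domain \<Phi> \<longrightarrow> \<Phi> \<inter> (x' \<times> UNIV) \<in> es_sym (tilde A)"
proof (intro ballI allI impI)
  fix \<Phi> X assume "\<Phi> \<in> es_sym (tilde A)" and X: "conf (tilde A) X \<and> X \<subseteq> Domain \<Phi>"
  obtain \<theta> \<phi> \<psi> where v: "sym_square A \<theta> \<phi> \<psi>" and P: "\<Phi> = square_iso A \<theta> \<phi> \<psi>" using hsymE[OF A \<open>\<Phi> \<in> _\<close>] by metis
  obtain \<theta>0 where t0: "\<theta>0 \<in> es_sym A" "X = prime_events A \<theta>0" using conf_tildeE[OF A] X by blast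
  have "\<theta>0 \<subseteq> \<theta>" using X t0(2) Domain_square_iso[OF v] P prime_events_subsetD by metis
  thus "\<Phi> \<inter> (X \<times> UNIV) \<in> es_sym (tilde A)" using square_iso_restrict_hsym[OF A v t0(1)] P t0(2) by simp
qed

lemma tilde_sym_extend:
  fixes A :: "'a essp"
  assumes A: "is_essp A"
  shows "\<forall>\<Phi>\<in>es_sym (tilde A). \<forall>x'. conf (tilde A) x' \<and> Domain \<Phi> \<subseteq> x' \<longrightarrow>
         (\<exists>\<Phi>'\<in>es_sym (tilde A). \<Phi> \<subseteq> \<Phi>' \<and> Domain \<Phi>' = x')"
proof (intro ballI allI impI)
  fix \<Phi> X assume "\<Phi> \<in> es_sym (tilde A)" and X: "conf (tilde A) X \<and> Domain \<Phi> \<subseteq> X"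
  obtain \<theta> \<phi> \<psi> where v: "sym_square A \<theta> \<phi> \<psi>" and P: "\<Phi> = square_iso A \<theta> \<phi> \<psi>" using hsymE[OF A \<open>\<Phi> \<in> _\<close>] by metis
  obtain \<theta>2 where t2: "\<theta>2 \<in> es_sym A" "X = prime_events A \<theta>2" using conf_tildeE[OF A] X by blast
  have "\<theta> \<subseteq> \<theta>2" using X t2(2) Domain_square_iso[OF v] P prime_events_subsetD by metis
  thus "\<exists>\<Phi>'\<in>es_sym (tilde A). \<Phi> \<subseteq> \<Phi>' \<and> Domain \<Phi>' = X" using square_iso_extend_hsym[OF A v t2(1)] P t2(2) by simp
qed

lemma tilde_sym_pol:
  fixes A :: "'a essp"
  assumes A: "is_essp A"
  shows "\<forall>\<Phi>\<in>es_sym (tilde A). \<forall>(e, e')\<in>\<Phi>. es_pol (tilde A) e = es_pol (tilde A) e'"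
proof (intro ballI)
  fix \<Phi> q assume "\<Phi> \<in> es_sym (tilde A)" "q \<in> \<Phi>"
  obtain \<theta> \<phi> \<psi> where v: "sym_square A \<theta> \<phi> \<psi>" and P: "\<Phi> = square_iso A \<theta> \<phi> \<psi>" using hsymE[OF A \<open>\<Phi> \<in> _\<close>] by metis
  obtain e e' where q': "q = (e,e')" by (rule prod.exhaust)
  show "case q of (e, e') \<Rightarrow> es_pol (tilde A) e = es_pol (tilde A) e'"
    using square_iso_pol[OF A v] \<open>q \<in> \<Phi>\<close> P q' by simp
qed

lemma tilde_sym_insert_cases:
  fixes A :: "'a essp"
  assumes A: "is_essp A" and v: "sym_square A \<theta> \<phi> \<psi>"
    and ins: "insert (E1, E2) (square_iso A \<theta> \<phi> \<psi>) \<in> es_sym (tilde A)"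
    and nin: "(E1, E2) \<notin> square_iso A \<theta> \<phi> \<psi>"
  obtains a b a' b' where "sym_square A (insert (a, b) \<theta>) (insert (a, a') \<phi>) (insert (b, b') \<psi>)"
    "a \<notin> Domain \<theta>" "b \<notin> Range \<theta>" "E1 = ((a, b), prime_at A (insert (a, b) \<theta>) a)"
    "E2 = ((a', b'), prime_at A (conjugate (insert (a, a') \<phi>) (insert (a, b) \<theta>) (insert (b, b') \<psi>)) a')"
proof -
  obtain \<theta>1 \<phi>1 \<psi>1 where v1: "sym_square A \<theta>1 \<phi>1 \<psi>1"
    and eq: "insert (E1, E2) (square_iso A \<theta> \<phi> \<psi>) = square_iso A \<theta>1 \<phi>1 \<psi>1"
    using hsymE[OF A ins] by metis
  obtain a b a' b' where "\<theta>1 = insert (a, b) \<theta>" "\<phi>1 = insert (a, a') \<phi>" "\<psi>1 = insert (b, b') \<psi>"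
    "a \<notin> Domain \<theta>" "b \<notin> Range \<theta>"
    "(E1, E2) = (((a, b), prime_at A \<theta>1 a), ((a', b'), prime_at A (conjugate \<phi>1 \<theta>1 \<psi>1) a'))"
    by (rule square_iso_insert_cases[OF A v v1 eq nin])
  thus ?thesis using that[of a b a' b'] v1 by simp
qed

lemma is_essp_tilde:
  fixes A :: "'a essp"
  assumes A: "is_essp A"
  shows "is_essp (tilde A)"
  unfolding is_essp_def iso_family_def
  using is_es_tilde[OF A] tilde_sym_bij[OF A] tilde_sym_Id_on[OF A] tilde_sym_converse[OF A] tilde_sym_relcomp[OF A]
    tilde_sym_restrict[OF A] tilde_sym_extend[OF A] tilde_sym_pol[OF A] by blast

section \<open>The induced map\<close>

lemma act_mem: "(c,d) \<in> act \<sigma> \<theta> \<longleftrightarrow> (\<exists>a b. (a,b) \<in> \<theta> \<and> c = \<sigma> a \<and> d = \<sigma> b)"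
  unfolding act_def by force

lemma Domain_act: "Domain (act \<sigma> \<theta>) = \<sigma> ` Domain \<theta>"
  unfolding act_def by force

lemma Range_act: "Range (act \<sigma> \<theta>) = \<sigma> ` Range \<theta>"
  unfolding act_def by force

lemma act_mono: "\<theta> \<subseteq> \<theta>' \<Longrightarrow> act \<sigma> \<theta> \<subseteq> act \<sigma> \<theta>'"
  unfolding act_def by blast

lemma act_insert: "act \<sigma> (insert (a,b) \<theta>) = insert (\<sigma> a, \<sigma> b) (act \<sigma> \<theta>)"
  unfolding act_def by simp

lemma act_Id_on: "act \<sigma> (Id_on D) = Id_on (\<sigma> ` D)"
  unfolding act_def by auto

locale essp_morphism =
  fixes S :: "'a essp" and A :: "'b essp" and \<sigma> :: "'a \<Rightarrow> 'b"
  assumes morphism: "essp_map S A \<sigma>"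
begin

lemma S_essp: "is_essp S" using morphism unfolding essp_map_def by simp

lemma A_essp: "is_essp A" using morphism unfolding essp_map_def by simp

lemma morphism_es_map: "es_map S A \<sigma>" using morphism unfolding essp_map_def by simp

lemma act_sym: "\<theta> \<in> es_sym S \<Longrightarrow> act \<sigma> \<theta> \<in> es_sym A" using morphism unfolding essp_map_def by blast

lemma conf_image: "conf S x \<Longrightarrow> conf A (\<sigma> ` x)" using morphism_es_map unfolding es_map_def by blast

lemma inj_on_conf: "conf S x \<Longrightarrow> inj_on \<sigma> x" using morphism_es_map unfolding es_map_def by blast

lemma pol_preserved: "a \<in> es_ev S \<Longrightarrow> es_pol A (\<sigma> a) = es_pol S a" using morphism_es_map unfolding es_map_def by blast

lemma inj_on_Domain: "\<theta> \<in> es_sym S \<Longrightarrow> a \<in> Domain \<theta> \<Longrightarrow> c \<in> Domain \<theta> \<Longrightarrow> \<sigma> a = \<sigma> c \<Longrightarrow> a = c"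
  using inj_on_conf[OF sym_conf_Domain[OF S_essp]] unfolding inj_on_def by blast

lemma inj_on_Range: "\<theta> \<in> es_sym S \<Longrightarrow> a \<in> Range \<theta> \<Longrightarrow> c \<in> Range \<theta> \<Longrightarrow> \<sigma> a = \<sigma> c \<Longrightarrow> a = c"
  using inj_on_conf[OF sym_conf_Range[OF S_essp]] unfolding inj_on_def by blast

lemma tmap_prime_event:
  assumes th: "\<theta> \<in> es_sym S" and ab: "(a,b) \<in> \<theta>"
  shows "tmap A \<sigma> ((a,b), prime_at S \<theta> a) = ((\<sigma> a, \<sigma> b), prime_at A (act \<sigma> \<theta>) (\<sigma> a))"
proof -
  have "{(c, d) \<in> act \<sigma> (prime_at S \<theta> a). es_le A c (\<sigma> a)} = prime_at A (act \<sigma> \<theta>) (\<sigma> a)"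
  proof
    show "{(c, d) \<in> act \<sigma> (prime_at S \<theta> a). es_le A c (\<sigma> a)} \<subseteq> prime_at A (act \<sigma> \<theta>) (\<sigma> a)"
      using act_mono[OF prime_at_subset, of \<sigma> S \<theta> a] by (auto simp: prime_at_def[of A])
    show "prime_at A (act \<sigma> \<theta>) (\<sigma> a) \<subseteq> {(c, d) \<in> act \<sigma> (prime_at S \<theta> a). es_le A c (\<sigma> a)}"
    proof
      fix p assume p: "p \<in> prime_at A (act \<sigma> \<theta>) (\<sigma> a)"
      obtain c d where p': "p = (c,d)" by (rule prod.exhaust)
      have cd: "(c,d) \<in> act \<sigma> \<theta>" "es_le A c (\<sigma> a)" using p p' unfolding prime_at_def by auto
      obtain a0 b0 where ab0: "(a0,b0) \<in> \<theta>" "c = \<sigma> a0" "d = \<sigma> b0" using cd(1) unfolding act_mem by blast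
      have aD: "a \<in> Domain \<theta>" using ab by blast
      have cdn: "conf S (down S a)" using conf_down[OF essp_is_es[OF S_essp] sym_conf_Domain[OF S_essp th] aD] .
      have "a \<in> down S a" using down_self[OF essp_is_es[OF S_essp]] conf_subset_ev[OF sym_conf_Domain[OF S_essp th]] aD by blast
      hence "\<sigma> a \<in> \<sigma> ` down S a" by blast
      hence "c \<in> \<sigma> ` down S a" using conf_down_closed[OF conf_image[OF cdn]] cd(2) by blast
      then obtain a1 where a1: "a1 \<in> down S a" "c = \<sigma> a1" by blast
      have "down S a \<subseteq> Domain \<theta>" using down_subset_conf[OF sym_conf_Domain[OF S_essp th] aD] .
      hence "a1 = a0" using inj_on_Domain[OF th] a1 ab0 by blast
      hence "(a0,b0) \<in> prime_at S \<theta> a" using a1(1) ab0(1) unfolding prime_at_def down_def by simp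
      thus "p \<in> {(c, d) \<in> act \<sigma> (prime_at S \<theta> a). es_le A c (\<sigma> a)}"
        using p' ab0 cd(2) unfolding act_mem by auto
    qed
  qed
  thus ?thesis unfolding tmap_def by simp
qed

lemma tmap_image_prime_events:
  assumes th: "\<theta> \<in> es_sym S"
  shows "tmap A \<sigma> ` prime_events S \<theta> = prime_events A (act \<sigma> \<theta>)"
proof
  show "tmap A \<sigma> ` prime_events S \<theta> \<subseteq> prime_events A (act \<sigma> \<theta>)"
  proof
    fix E assume "E \<in> tmap A \<sigma> ` prime_events S \<theta>"
    then obtain e where "e \<in> prime_events S \<theta>" "E = tmap A \<sigma> e" by blast
    then obtain a b where ab: "(a,b) \<in> \<theta>" "E = tmap A \<sigma> ((a,b), prime_at S \<theta> a)" unfolding mem_prime_events by blast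
    have "(\<sigma> a, \<sigma> b) \<in> act \<sigma> \<theta>" unfolding act_mem using ab by blast
    thus "E \<in> prime_events A (act \<sigma> \<theta>)" using tmap_prime_event[OF th ab(1)] ab(2) prime_eventsI by metis
  qed
  show "prime_events A (act \<sigma> \<theta>) \<subseteq> tmap A \<sigma> ` prime_events S \<theta>"
  proof
    fix E assume "E \<in> prime_events A (act \<sigma> \<theta>)"
    then obtain c d where cd: "(c,d) \<in> act \<sigma> \<theta>" "E = ((c,d), prime_at A (act \<sigma> \<theta>) c)" unfolding mem_prime_events by blast
    then obtain a b where ab: "(a,b) \<in> \<theta>" "c = \<sigma> a" "d = \<sigma> b" unfolding act_mem by blast
    have "E = tmap A \<sigma> ((a,b), prime_at S \<theta> a)" using tmap_prime_event[OF th ab(1)] cd(2) ab by simp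
    thus "E \<in> tmap A \<sigma> ` prime_events S \<theta>" using prime_eventsI[OF ab(1)] by blast
  qed
qed

lemma tmap_tev:
  assumes e: "e \<in> tev S"
  shows "tmap A \<sigma> e = ((\<sigma> (fst (fst e)), \<sigma> (snd (fst e))), prime_at A (act \<sigma> (snd e)) (\<sigma> (fst (fst e))))"
proof -
  have "e = ((fst (fst e), snd (fst e)), prime_at S (snd e) (fst (fst e)))" using tev_prime_at[OF e] by simp
  moreover have "(fst (fst e), snd (fst e)) \<in> snd e" using tev_top[OF e] by simp
  ultimately show ?thesis using tmap_prime_event[OF tev_sym[OF e]] by metis
qed

lemma act_conjugate:
  assumes v: "sym_square S \<theta> \<phi> \<psi>"
  shows "act \<sigma> (conjugate \<phi> \<theta> \<psi>) = conjugate (act \<sigma> \<phi>) (act \<sigma> \<theta>) (act \<sigma> \<psi>)"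
proof
  note vd = sym_squareD[OF v]
  show "act \<sigma> (conjugate \<phi> \<theta> \<psi>) \<subseteq> conjugate (act \<sigma> \<phi>) (act \<sigma> \<theta>) (act \<sigma> \<psi>)"
    unfolding act_def conjugate_def by blast
  show "conjugate (act \<sigma> \<phi>) (act \<sigma> \<theta>) (act \<sigma> \<psi>) \<subseteq> act \<sigma> (conjugate \<phi> \<theta> \<psi>)"
  proof
    fix p assume p: "p \<in> conjugate (act \<sigma> \<phi>) (act \<sigma> \<theta>) (act \<sigma> \<psi>)"
    obtain x y where p': "p = (x,y)" by (rule prod.exhaust)
    obtain u v where uv: "(u,x) \<in> act \<sigma> \<phi>" "(u,v) \<in> act \<sigma> \<theta>" "(v,y) \<in> act \<sigma> \<psi>"
      using p unfolding p' mem_conjugate by blast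
    obtain x1 x2 where x: "(x1,x2) \<in> \<phi>" "u = \<sigma> x1" "x = \<sigma> x2" using uv(1) unfolding act_mem by blast
    obtain y1 y2 where y: "(y1,y2) \<in> \<theta>" "u = \<sigma> y1" "v = \<sigma> y2" using uv(2) unfolding act_mem by blast
    obtain z1 z2 where z: "(z1,z2) \<in> \<psi>" "v = \<sigma> z1" "y = \<sigma> z2" using uv(3) unfolding act_mem by blast
    have "x1 = y1" using inj_on_Domain[OF vd(1), of x1 y1] x y vd(4) by blast
    moreover have "z1 = y2" using inj_on_Range[OF vd(1), of z1 y2] z y vd(5) by blast
    ultimately have "(x2,z2) \<in> conjugate \<phi> \<theta> \<psi>" unfolding mem_conjugate using x y z by blast
    thus "p \<in> act \<sigma> (conjugate \<phi> \<theta> \<psi>)" unfolding p' act_mem using x z by blast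
  qed
qed

lemma sym_square_act:
  assumes v: "sym_square S \<theta> \<phi> \<psi>"
  shows "sym_square A (act \<sigma> \<theta>) (act \<sigma> \<phi>) (act \<sigma> \<psi>)"
  using sym_squareD[OF v] act_sym unfolding sym_square_def Domain_act Range_act by simp

lemma tmap_square_iso_pair:
  assumes v: "sym_square S \<theta> \<phi> \<psi>" and m: "(a, b) \<in> \<theta>" "(a, a') \<in> \<phi>" "(b, b') \<in> \<psi>"
  shows "tmap A \<sigma> ((a, b), prime_at S \<theta> a) = ((\<sigma> a, \<sigma> b), prime_at A (act \<sigma> \<theta>) (\<sigma> a))"
    "tmap A \<sigma> ((a', b'), prime_at S (conjugate \<phi> \<theta> \<psi>) a') =
      ((\<sigma> a', \<sigma> b'), prime_at A (conjugate (act \<sigma> \<phi>) (act \<sigma> \<theta>) (act \<sigma> \<psi>)) (\<sigma> a'))"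
proof -
  have "(a', b') \<in> conjugate \<phi> \<theta> \<psi>" unfolding mem_conjugate using m by blast
  thus "tmap A \<sigma> ((a', b'), prime_at S (conjugate \<phi> \<theta> \<psi>) a') =
      ((\<sigma> a', \<sigma> b'), prime_at A (conjugate (act \<sigma> \<phi>) (act \<sigma> \<theta>) (act \<sigma> \<psi>)) (\<sigma> a'))"
    using tmap_prime_event[OF conjugate_sym(1)[OF S_essp v]] act_conjugate[OF v] by simp
qed (rule tmap_prime_event[OF sym_squareD(1)[OF v] m(1)])

lemma act_square_iso:
  assumes v: "sym_square S \<theta> \<phi> \<psi>"
  shows "act (tmap A \<sigma>) (square_iso S \<theta> \<phi> \<psi>) = square_iso A (act \<sigma> \<theta>) (act \<sigma> \<phi>) (act \<sigma> \<psi>)"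
proof
  note vd = sym_squareD[OF v]
  note ac = act_conjugate[OF v]
  have cs: "conjugate \<phi> \<theta> \<psi> \<in> es_sym S" using conjugate_sym[OF S_essp v] by simp
  show "act (tmap A \<sigma>) (square_iso S \<theta> \<phi> \<psi>) \<subseteq> square_iso A (act \<sigma> \<theta>) (act \<sigma> \<phi>) (act \<sigma> \<psi>)"
  proof
    fix q assume q: "q \<in> act (tmap A \<sigma>) (square_iso S \<theta> \<phi> \<psi>)"
    obtain E E' where q': "q = (E,E')" by (rule prod.exhaust)
    obtain e e' where ee: "(e,e') \<in> square_iso S \<theta> \<phi> \<psi>" "E = tmap A \<sigma> e" "E' = tmap A \<sigma> e'"
      using q unfolding q' act_mem by blast
    obtain a b a' b' where m: "(a,b) \<in> \<theta>" "(a,a') \<in> \<phi>" "(b,b') \<in> \<psi>"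
      "e = ((a,b), prime_at S \<theta> a)" "e' = ((a',b'), prime_at S (conjugate \<phi> \<theta> \<psi>) a')" using ee(1) unfolding mem_square_iso by blast
    have ab': "(a',b') \<in> conjugate \<phi> \<theta> \<psi>" unfolding mem_conjugate using m by blast
    have "E = ((\<sigma> a, \<sigma> b), prime_at A (act \<sigma> \<theta>) (\<sigma> a))" using tmap_prime_event[OF vd(1) m(1)] ee(2) m(4) by simp
    moreover have "E' = ((\<sigma> a', \<sigma> b'), prime_at A (conjugate (act \<sigma> \<phi>) (act \<sigma> \<theta>) (act \<sigma> \<psi>)) (\<sigma> a'))"
      using tmap_prime_event[OF cs ab'] ee(3) m(5) ac by simp
    moreover have "(\<sigma> a, \<sigma> b) \<in> act \<sigma> \<theta>" "(\<sigma> a, \<sigma> a') \<in> act \<sigma> \<phi>" "(\<sigma> b, \<sigma> b') \<in> act \<sigma> \<psi>"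
      unfolding act_mem using m by blast+
    ultimately show "q \<in> square_iso A (act \<sigma> \<theta>) (act \<sigma> \<phi>) (act \<sigma> \<psi>)" unfolding q' mem_square_iso by blast
  qed
  show "square_iso A (act \<sigma> \<theta>) (act \<sigma> \<phi>) (act \<sigma> \<psi>) \<subseteq> act (tmap A \<sigma>) (square_iso S \<theta> \<phi> \<psi>)"
  proof
    fix q assume q: "q \<in> square_iso A (act \<sigma> \<theta>) (act \<sigma> \<phi>) (act \<sigma> \<psi>)"
    obtain E E' where q': "q = (E,E')" by (rule prod.exhaust)
    obtain c d c' d' where m: "(c,d) \<in> act \<sigma> \<theta>" "(c,c') \<in> act \<sigma> \<phi>" "(d,d') \<in> act \<sigma> \<psi>"
      "E = ((c,d), prime_at A (act \<sigma> \<theta>) c)" "E' = ((c',d'), prime_at A (conjugate (act \<sigma> \<phi>) (act \<sigma> \<theta>) (act \<sigma> \<psi>)) c')"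
      using q unfolding q' mem_square_iso by blast
    obtain a b where ab: "(a,b) \<in> \<theta>" "c = \<sigma> a" "d = \<sigma> b" using m(1) unfolding act_mem by blast
    obtain x a' where xa: "(x,a') \<in> \<phi>" "c = \<sigma> x" "c' = \<sigma> a'" using m(2) unfolding act_mem by blast
    obtain y b' where yb: "(y,b') \<in> \<psi>" "d = \<sigma> y" "d' = \<sigma> b'" using m(3) unfolding act_mem by blast
    have "x = a" using inj_on_Domain[OF vd(1), of x a] xa ab vd(4) by blast
    moreover have "y = b" using inj_on_Range[OF vd(1), of y b] yb ab vd(5) by blast
    ultimately have h: "(((a,b), prime_at S \<theta> a), ((a',b'), prime_at S (conjugate \<phi> \<theta> \<psi>) a')) \<in> square_iso S \<theta> \<phi> \<psi>"
      unfolding mem_square_iso using ab xa yb by blast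
    have ab': "(a',b') \<in> conjugate \<phi> \<theta> \<psi>" unfolding mem_conjugate using ab xa yb \<open>x = a\<close> \<open>y = b\<close> by blast
    have "E = tmap A \<sigma> ((a,b), prime_at S \<theta> a)" using tmap_prime_event[OF vd(1) ab(1)] m(4) ab by simp
    moreover have "E' = tmap A \<sigma> ((a',b'), prime_at S (conjugate \<phi> \<theta> \<psi>) a')" using tmap_prime_event[OF cs ab'] m(5) xa yb ac by simp
    ultimately show "q \<in> act (tmap A \<sigma>) (square_iso S \<theta> \<phi> \<psi>)" unfolding q' act_mem using h by blast
  qed
qed

lemma tmap_essp_map: "essp_map (tilde S) (tilde A) (tmap A \<sigma>)"
proof -
  have ev: "tmap A \<sigma> ` es_ev (tilde S) \<subseteq> es_ev (tilde A)"
  proof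
    fix E assume "E \<in> tmap A \<sigma> ` es_ev (tilde S)"
    then obtain e where e: "e \<in> tev S" "E = tmap A \<sigma> e" by auto
    have "E \<in> prime_events A (act \<sigma> (snd e))" using tev_mem_prime_events[OF e(1)] tmap_image_prime_events[OF tev_sym[OF e(1)]] e(2) by blast
    thus "E \<in> es_ev (tilde A)" using prime_events_tev[OF A_essp act_sym[OF tev_sym[OF e(1)]]] by auto
  qed
  have pol: "\<forall>s\<in>es_ev (tilde S). es_pol (tilde A) (tmap A \<sigma> s) = es_pol (tilde S) s"
  proof
    fix e assume "e \<in> es_ev (tilde S)"
    hence e: "e \<in> tev S" by simp
    show "es_pol (tilde A) (tmap A \<sigma> e) = es_pol (tilde S) e"
      using tmap_tev[OF e] pol_preserved[OF tev_ev[OF S_essp e]] by simp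
  qed
  have cf: "\<forall>X. conf (tilde S) X \<longrightarrow> conf (tilde A) (tmap A \<sigma> ` X) \<and> inj_on (tmap A \<sigma>) X"
  proof (intro allI impI)
    fix X assume "conf (tilde S) X"
    then obtain \<theta> where th: "\<theta> \<in> es_sym S" "X = prime_events S \<theta>" using conf_tildeE[OF S_essp] by blast
    have "conf (tilde A) (tmap A \<sigma> ` X)" unfolding th(2) tmap_image_prime_events[OF th(1)] conf_tilde_eq
      using conf_prime_events[OF A_essp act_sym[OF th(1)]] .
    moreover have "inj_on (tmap A \<sigma>) X"
    proof (rule inj_onI)
      fix e1 e2 assume e1: "e1 \<in> X" and e2: "e2 \<in> X" and eq: "tmap A \<sigma> e1 = tmap A \<sigma> e2"
      obtain a b where ab: "(a,b) \<in> \<theta>" "e1 = ((a,b), prime_at S \<theta> a)" using e1 unfolding th(2) mem_prime_events by blast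
      obtain c d where cd: "(c,d) \<in> \<theta>" "e2 = ((c,d), prime_at S \<theta> c)" using e2 unfolding th(2) mem_prime_events by blast
      have "\<sigma> a = \<sigma> c" "\<sigma> b = \<sigma> d" using eq tmap_prime_event[OF th(1) ab(1)] tmap_prime_event[OF th(1) cd(1)] ab(2) cd(2) by auto
      hence "a = c" "b = d" using inj_on_Domain[OF th(1), of a c] inj_on_Range[OF th(1), of b d] ab(1) cd(1) by blast+
      thus "e1 = e2" using ab cd by simp
    qed
    ultimately show "conf (tilde A) (tmap A \<sigma> ` X) \<and> inj_on (tmap A \<sigma>) X" by simp
  qed
  have sy: "\<forall>\<Theta>\<in>es_sym (tilde S). act (tmap A \<sigma>) \<Theta> \<in> es_sym (tilde A)"
  proof
    fix \<Theta> assume "\<Theta> \<in> es_sym (tilde S)"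
    then obtain \<theta> \<phi> \<psi> where v: "sym_square S \<theta> \<phi> \<psi>" and P: "\<Theta> = square_iso S \<theta> \<phi> \<psi>" using hsymE[OF S_essp] by metis
    show "act (tmap A \<sigma>) \<Theta> \<in> es_sym (tilde A)" using act_square_iso[OF v] square_iso_hsym[OF A_essp sym_square_act[OF v]] P by simp
  qed
  show ?thesis unfolding essp_map_def es_map_def
    using is_essp_tilde[OF S_essp] is_essp_tilde[OF A_essp] ev pol cf sy by blast
qed

end

section \<open>Thinness\<close>

lemma new_pairs_positive:
  fixes S :: "'a essp"
  assumes A: "is_essp S" and v: "sym_square S \<theta> \<phi> \<psi>" and v1: "sym_square S \<theta>1 \<phi>1 \<psi>1"
    and s: "square_iso S \<theta> \<phi> \<psi> \<subseteq> square_iso S \<theta>1 \<phi>1 \<psi>1"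
    and pos: "\<forall>(e, e')\<in>square_iso S \<theta>1 \<phi>1 \<psi>1 - square_iso S \<theta> \<phi> \<psi>. es_pol (tilde S) e \<and> es_pol (tilde S) e'"
  shows "\<forall>(x, x')\<in>\<phi>1 - \<phi>. es_pol S x \<and> es_pol S x'" "\<forall>(y, y')\<in>\<psi>1 - \<psi>. es_pol S y \<and> es_pol S y'"
proof -
  note vd1 = sym_squareD[OF v1] and vd = sym_squareD[OF v]
  note ss = square_iso_subset_imp[OF A v v1 s]
  show "\<forall>(x, x')\<in>\<phi>1 - \<phi>. es_pol S x \<and> es_pol S x'"
  proof (intro ballI)
    fix p assume p: "p \<in> \<phi>1 - \<phi>"
    obtain x x' where p': "p = (x,x')" by (rule prod.exhaust)
    obtain y where y: "(x,y) \<in> \<theta>1" using p p' vd1(4) by blast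
    obtain y' where y': "(y,y') \<in> \<psi>1" using y vd1(5) by blast
    define q where "q = (((x,y), prime_at S \<theta>1 x), ((x',y'), prime_at S (conjugate \<phi>1 \<theta>1 \<psi>1) x'))"
    have "q \<in> square_iso S \<theta>1 \<phi>1 \<psi>1" unfolding q_def mem_square_iso using y y' p p' by blast
    moreover have "q \<notin> square_iso S \<theta> \<phi> \<psi>"
    proof
      assume "q \<in> square_iso S \<theta> \<phi> \<psi>"
      then obtain a b a' b' where "(a,a') \<in> \<phi>" "((x,y), prime_at S \<theta>1 x) = ((a,b), prime_at S \<theta> a)"
        "((x',y'), prime_at S (conjugate \<phi>1 \<theta>1 \<psi>1) x') = ((a',b'), prime_at S (conjugate \<phi> \<theta> \<psi>) a')"
        unfolding q_def mem_square_iso by blast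
      thus False using p p' by auto
    qed
    ultimately have "q \<in> square_iso S \<theta>1 \<phi>1 \<psi>1 - square_iso S \<theta> \<phi> \<psi>" by blast
    hence "case q of (e, e') \<Rightarrow> es_pol (tilde S) e \<and> es_pol (tilde S) e'" using pos by blast
    thus "case p of (x, x') \<Rightarrow> es_pol S x \<and> es_pol S x'" using p' unfolding q_def by simp
  qed
  show "\<forall>(y, y')\<in>\<psi>1 - \<psi>. es_pol S y \<and> es_pol S y'"
  proof (intro ballI)
    fix p assume p: "p \<in> \<psi>1 - \<psi>"
    obtain y y' where p': "p = (y,y')" by (rule prod.exhaust)
    obtain x where x: "(x,y) \<in> \<theta>1" using p p' vd1(5) by blast
    obtain x' where x': "(x,x') \<in> \<phi>1" using x vd1(4) by blast
    define q where "q = (((x,y), prime_at S \<theta>1 x), ((x',y'), prime_at S (conjugate \<phi>1 \<theta>1 \<psi>1) x'))"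
    have "q \<in> square_iso S \<theta>1 \<phi>1 \<psi>1" unfolding q_def mem_square_iso using x x' p p' by blast
    moreover have "q \<notin> square_iso S \<theta> \<phi> \<psi>"
    proof
      assume "q \<in> square_iso S \<theta> \<phi> \<psi>"
      then obtain a b a' b' where "(b,b') \<in> \<psi>" "((x,y), prime_at S \<theta>1 x) = ((a,b), prime_at S \<theta> a)"
        "((x',y'), prime_at S (conjugate \<phi>1 \<theta>1 \<psi>1) x') = ((a',b'), prime_at S (conjugate \<phi> \<theta> \<psi>) a')"
        unfolding q_def mem_square_iso by blast
      thus False using p p' by auto
    qed
    ultimately have "q \<in> square_iso S \<theta>1 \<phi>1 \<psi>1 - square_iso S \<theta> \<phi> \<psi>" by blast
    hence "case q of (e, e') \<Rightarrow> es_pol (tilde S) e \<and> es_pol (tilde S) e'" using pos by blast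
    hence px: "es_pol S x" "es_pol S x'" unfolding q_def by simp_all
    have "es_pol S x = es_pol S y" using sym_pol[OF A vd1(1) x] .
    moreover have "(x',y') \<in> conjugate \<phi>1 \<theta>1 \<psi>1" unfolding mem_conjugate using x x' p p' by blast
    hence "es_pol S x' = es_pol S y'" using sym_pol[OF A conjugate_sym(1)[OF A v1]] by blast
    ultimately show "case p of (y, y') \<Rightarrow> es_pol S y \<and> es_pol S y'" using px p' by simp
  qed
qed

lemma thinD:
  assumes "thin S" "\<theta> \<in> es_sym S" "\<theta>1 \<in> es_sym S" "\<theta>2 \<in> es_sym S" "\<theta> \<subseteq> \<theta>1" "\<theta> \<subseteq> \<theta>2"
    "\<forall>(s, s')\<in>\<theta>1 - \<theta>. es_pol S s \<and> es_pol S s'" "\<forall>(s, s')\<in>\<theta>2 - \<theta>. es_pol S s \<and> es_pol S s'"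
    "conf S (Domain \<theta>1 \<union> Domain \<theta>2)"
  shows "\<theta>1 \<union> \<theta>2 \<in> es_sym S"
  using assms unfolding thin_def by blast

lemma thin_tilde:
  fixes S :: "'a essp"
  assumes S: "is_essp S" and th: "thin S"
  shows "thin (tilde S)"
  unfolding thin_def
proof (intro allI impI, elim conjE)
  fix \<Theta> \<Theta>1 \<Theta>2
  assume T: "\<Theta> \<in> es_sym (tilde S)" and T1: "\<Theta>1 \<in> es_sym (tilde S)" and T2: "\<Theta>2 \<in> es_sym (tilde S)"
    and s1: "\<Theta> \<subseteq> \<Theta>1" and s2: "\<Theta> \<subseteq> \<Theta>2"
    and p1: "\<forall>(s, s')\<in>\<Theta>1 - \<Theta>. es_pol (tilde S) s \<and> es_pol (tilde S) s'"
    and p2: "\<forall>(s, s')\<in>\<Theta>2 - \<Theta>. es_pol (tilde S) s \<and> es_pol (tilde S) s'"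
    and c: "conf (tilde S) (Domain \<Theta>1 \<union> Domain \<Theta>2)"
  obtain \<theta> \<phi> \<psi> where v: "sym_square S \<theta> \<phi> \<psi>" and P: "\<Theta> = square_iso S \<theta> \<phi> \<psi>" using hsymE[OF S T] by metis
  obtain \<theta>1 \<phi>1 \<psi>1 where v1: "sym_square S \<theta>1 \<phi>1 \<psi>1" and P1: "\<Theta>1 = square_iso S \<theta>1 \<phi>1 \<psi>1" using hsymE[OF S T1] by metis
  obtain \<theta>2 \<phi>2 \<psi>2 where v2: "sym_square S \<theta>2 \<phi>2 \<psi>2" and P2: "\<Theta>2 = square_iso S \<theta>2 \<phi>2 \<psi>2" using hsymE[OF S T2] by metis
  note vd = sym_squareD[OF v] and vd1 = sym_squareD[OF v1] and vd2 = sym_squareD[OF v2]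
  note ss1 = square_iso_subset_imp[OF S v v1 s1[unfolded P P1]] and ss2 = square_iso_subset_imp[OF S v v2 s2[unfolded P P2]]
  note np1 = new_pairs_positive[OF S v v1 s1[unfolded P P1] p1[unfolded P P1]]
  note np2 = new_pairs_positive[OF S v v2 s2[unfolded P P2] p2[unfolded P P2]]
  obtain \<theta>12 where t12: "\<theta>12 \<in> es_sym S" "Domain \<Theta>1 \<union> Domain \<Theta>2 = prime_events S \<theta>12"
    using conf_tildeE[OF S c] by blast
  have "\<theta>12 = \<theta>1 \<union> \<theta>2"
  proof -
    have "fst ` (Domain \<Theta>1 \<union> Domain \<Theta>2) = \<theta>1 \<union> \<theta>2"
      unfolding P1 P2 Domain_square_iso[OF v1] Domain_square_iso[OF v2] image_Un by simp
    thus ?thesis using t12(2) by simp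
  qed
  hence u: "\<theta>1 \<union> \<theta>2 \<in> es_sym S" using t12 by simp
  have phi: "\<phi>1 \<union> \<phi>2 \<in> es_sym S"
    using thinD[OF th vd(2) vd1(2) vd2(2) ss1(2) ss2(2) np1(1) np2(1)] sym_conf_Domain[OF S u] vd1(4) vd2(4)
    by (simp add: Domain_Un_eq)
  have psi: "\<psi>1 \<union> \<psi>2 \<in> es_sym S"
    using thinD[OF th vd(3) vd1(3) vd2(3) ss1(3) ss2(3) np1(2) np2(2)] sym_conf_Range[OF S u] vd1(5) vd2(5)
    by (simp add: Range_Un_eq)
  have v12: "sym_square S (\<theta>1 \<union> \<theta>2) (\<phi>1 \<union> \<phi>2) (\<psi>1 \<union> \<psi>2)"
    unfolding sym_square_def using u phi psi vd1 vd2 by (simp add: Domain_Un_eq Range_Un_eq)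
  have "\<Theta>1 \<union> \<Theta>2 = square_iso S (\<theta>1 \<union> \<theta>2) (\<phi>1 \<union> \<phi>2) (\<psi>1 \<union> \<psi>2)"
    unfolding P1 P2 by (rule square_iso_Un[OF S v1 v2 v12])
  thus "\<Theta>1 \<union> \<Theta>2 \<in> es_sym (tilde S)" using square_iso_hsym[OF S v12] by simp
qed

section \<open>Courtesy\<close>

lemma tev_lt:
  fixes A :: "'a essp"
  assumes A: "is_essp A"
  shows "es_lt (tilde A) d f \<longleftrightarrow> d \<in> tev A \<and> f \<in> tev A \<and> snd d \<subseteq> snd f \<and> snd d \<noteq> snd f"
  unfolding es_lt_def using tev_eq_if_snd_eq[OF A, of d f] by auto

lemma imm_tilde_imp_imm:
  fixes S :: "'a essp"
  assumes S: "is_essp S" and i: "imm (tilde S) e e'"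
  shows "imm S (fst (fst e)) (fst (fst e'))"
proof -
  have es: "is_es S" using essp_is_es[OF S] .
  have lt: "e \<in> tev S" "e' \<in> tev S" "snd e \<subseteq> snd e'" "snd e \<noteq> snd e'"
    using i unfolding imm_def tev_lt[OF S] by auto
  have nb: "\<not> (\<exists>c. es_lt (tilde S) e c \<and> es_lt (tilde S) c e')" using i unfolding imm_def by blast
  define s1 where "s1 = fst (fst e)"
  define t1 where "t1 = fst (fst e')"
  have d1: "Domain (snd e) = down S s1" and d2: "Domain (snd e') = down S t1"
    using tev_Domain lt unfolding s1_def t1_def by blast+
  have s1ev: "s1 \<in> es_ev S" and t1ev: "t1 \<in> es_ev S" using tev_ev[OF S] lt unfolding s1_def t1_def by blast+
  have sdom: "down S s1 \<subseteq> down S t1" using d1 d2 lt(3) by blast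
  have le: "es_le S s1 t1" using es_le_if_down_subset[OF es s1ev sdom] .
  have ne: "s1 \<noteq> t1"
  proof
    assume "s1 = t1"
    hence "snd e = snd e'" using sym_eq_if_subset_Domain[OF S tev_sym[OF lt(2)] lt(3)] d1 d2 by simp
    thus False using lt(4) by simp
  qed
  have nc: "\<not> (\<exists>c. es_lt S s1 c \<and> es_lt S c t1)"
  proof
    assume "\<exists>c. es_lt S s1 c \<and> es_lt S c t1"
    then obtain c where c: "es_le S s1 c" "s1 \<noteq> c" "es_le S c t1" "c \<noteq> t1" unfolding es_lt_def by blast
    have "c \<in> Domain (snd e')" using d2 c(3) unfolding down_def by simp
    then obtain d where cd: "(c,d) \<in> snd e'" by blast
    define f where "f = ((c,d), prime_at S (snd e') c)"
    have ft: "f \<in> tev S" unfolding f_def using prime_at_tev[OF S tev_sym[OF lt(2)] cd] .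
    have fd: "Domain (snd f) = down S c" unfolding f_def using prime_at_sym(2)[OF S tev_sym[OF lt(2)]] cd by auto
    have cev: "c \<in> es_ev S" using es_le_ev[OF es c(3)] by blast
    have "snd e \<subseteq> snd f"
    proof
      fix p assume p: "p \<in> snd e"
      hence "fst p \<in> Domain (snd e)" by (metis Domain.DomainI prod.collapse)
      hence "fst p \<in> down S s1" using d1 by simp
      hence "es_le S (fst p) c" using es_trans[OF es _ c(1)] unfolding down_def by blast
      thus "p \<in> snd f" unfolding f_def prime_at_def using p lt(3) by auto
    qed
    moreover have "snd e \<noteq> snd f" using d1 fd down_inj[OF es s1ev cev] c(2) by metis
    moreover have "snd f \<subseteq> snd e'" unfolding f_def using prime_at_subset by simp
    moreover have "snd f \<noteq> snd e'" using d2 fd down_inj[OF es cev t1ev] c(4) by metis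
    ultimately have "es_lt (tilde S) e f \<and> es_lt (tilde S) f e'" unfolding tev_lt[OF S] using lt ft by blast
    thus False using nb by blast
  qed
  show ?thesis unfolding imm_def es_lt_def using le ne nc unfolding s1_def t1_def es_lt_def by blast
qed

context essp_morphism
begin

lemma imm_imp_imm_tilde:
  assumes e: "e \<in> tev S" and e': "e' \<in> tev S" and s: "snd e \<subseteq> snd e'"
    and i: "imm A (\<sigma> (fst (fst e))) (\<sigma> (fst (fst e')))"
  shows "imm (tilde A) (tmap A \<sigma> e) (tmap A \<sigma> e')"
proof -
  have es: "is_es A" using essp_is_es[OF A_essp] .
  define s1 where "s1 = fst (fst e)"
  define t1 where "t1 = fst (fst e')"
  define E where "E = tmap A \<sigma> e"
  define E' where "E' = tmap A \<sigma> e'"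
  have Ee: "E = ((\<sigma> s1, \<sigma> (snd (fst e))), prime_at A (act \<sigma> (snd e)) (\<sigma> s1))" unfolding E_def s1_def using tmap_tev[OF e] .
  have Ee': "E' = ((\<sigma> t1, \<sigma> (snd (fst e'))), prime_at A (act \<sigma> (snd e')) (\<sigma> t1))" unfolding E'_def t1_def using tmap_tev[OF e'] .
  have Et: "E \<in> tev A" and Et': "E' \<in> tev A"
    using tmap_essp_map unfolding essp_map_def es_map_def E_def E'_def using e e' by auto
  have lt: "es_le A (\<sigma> s1) (\<sigma> t1)" "\<sigma> s1 \<noteq> \<sigma> t1" and nb: "\<not> (\<exists>c. es_lt A (\<sigma> s1) c \<and> es_lt A c (\<sigma> t1))"
    using i unfolding imm_def es_lt_def s1_def t1_def by blast+
  have dE: "Domain (snd E) = down A (\<sigma> s1)" and dE': "Domain (snd E') = down A (\<sigma> t1)"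
    using tev_Domain[OF Et] tev_Domain[OF Et'] Ee Ee' by simp_all
  have sub: "snd E \<subseteq> snd E'"
    unfolding Ee Ee' prime_at_def using act_mono[OF s, of \<sigma>] es_trans[OF es _ lt(1)] by auto
  have sev: "\<sigma> s1 \<in> es_ev A" and tev': "\<sigma> t1 \<in> es_ev A" using es_le_ev[OF es lt(1)] by auto
  have ne: "snd E \<noteq> snd E'" using dE dE' down_inj[OF es sev tev'] lt(2) by metis
  have nc: "\<not> (\<exists>D. es_lt (tilde A) E D \<and> es_lt (tilde A) D E')"
  proof
    assume "\<exists>D. es_lt (tilde A) E D \<and> es_lt (tilde A) D E'"
    then obtain D where D: "D \<in> tev A" "snd E \<subseteq> snd D" "snd E \<noteq> snd D" "snd D \<subseteq> snd E'" "snd D \<noteq> snd E'"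
      unfolding tev_lt[OF A_essp] by blast
    define c where "c = fst (fst D)"
    have dD: "Domain (snd D) = down A c" using tev_Domain[OF D(1)] c_def by simp
    have cev: "c \<in> es_ev A" using tev_ev[OF A_essp D(1)] c_def by simp
    have l1: "es_le A (\<sigma> s1) c" using es_le_if_down_subset[OF es sev] dE dD D(2) by (metis Domain_mono)
    have l2: "es_le A c (\<sigma> t1)" using es_le_if_down_subset[OF es cev] dE' dD D(4) by (metis Domain_mono)
    have n1: "\<sigma> s1 \<noteq> c"
    proof
      assume "\<sigma> s1 = c"
      hence "snd E = snd D" using sym_eq_if_subset_Domain[OF A_essp tev_sym[OF D(1)] D(2)] dE dD by simp
      thus False using D(3) by simp
    qed
    have n2: "c \<noteq> \<sigma> t1"
    proof
      assume "c = \<sigma> t1"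
      hence "snd D = snd E'" using sym_eq_if_subset_Domain[OF A_essp tev_sym[OF Et'] D(4)] dE' dD by simp
      thus False using D(5) by simp
    qed
    show False using nb l1 l2 n1 n2 unfolding es_lt_def by blast
  qed
  have "es_lt (tilde A) E E'" unfolding tev_lt[OF A_essp] using Et Et' sub ne by blast
  thus ?thesis using nc unfolding imm_def E_def E'_def by blast
qed

lemma courteous_tilde:
  assumes c: "courteous S A \<sigma>"
  shows "courteous (tilde S) (tilde A) (tmap A \<sigma>)"
  unfolding courteous_def
proof (intro allI impI, elim conjE)
  fix e e' assume i: "imm (tilde S) e e'" and p: "es_pol (tilde S) e \<or> \<not> es_pol (tilde S) e'"
  have lt: "e \<in> tev S" "e' \<in> tev S" "snd e \<subseteq> snd e'"
    using i unfolding imm_def tev_lt[OF S_essp] by auto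
  have "imm S (fst (fst e)) (fst (fst e'))" using imm_tilde_imp_imm[OF S_essp i] .
  moreover have "es_pol S (fst (fst e)) \<or> \<not> es_pol S (fst (fst e'))" using p by simp
  ultimately have "imm A (\<sigma> (fst (fst e))) (\<sigma> (fst (fst e')))" using c unfolding courteous_def by blast
  thus "imm (tilde A) (tmap A \<sigma> e) (tmap A \<sigma> e')" using imm_imp_imm_tilde lt by blast
qed

end

section \<open>Strong receptivity\<close>

lemma strong_receptiveD:
  assumes "strong_receptive S A \<sigma>" "\<theta> \<in> es_sym S" "(a, b) \<notin> act \<sigma> \<theta>"
    "insert (a, b) (act \<sigma> \<theta>) \<in> es_sym A" "\<not> es_pol A a" "\<not> es_pol A b"
  shows "\<exists>!p. insert p \<theta> \<in> es_sym S \<and> \<sigma> (fst p) = a \<and> \<sigma> (snd p) = b"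
  using assms unfolding strong_receptive_def by blast

context essp_morphism
begin

text \<open>Strong receptivity applied to the identity symmetry on \<open>D\<close>: this is what forces the
  separately lifted sides of a square to agree on their new events.\<close>

lemma strong_receptive_Domain_unique:
  assumes sr: "strong_receptive S A \<sigma>" and D: "conf S D"
    and \<theta>1: "\<theta>1 \<in> es_sym S" "Domain \<theta>1 = insert s1 D"
    and \<theta>2: "\<theta>2 \<in> es_sym S" "Domain \<theta>2 = insert s2 D"
    and eq: "\<sigma> s1 = \<sigma> s2" and new: "\<sigma> s1 \<notin> \<sigma> ` D" and neg: "\<not> es_pol A (\<sigma> s1)"
  shows "s1 = s2"
proof -
  have "insert (\<sigma> s1, \<sigma> s1) (act \<sigma> (Id_on D)) = Id_on (\<sigma> ` Domain \<theta>1)"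
    unfolding act_Id_on \<theta>1(2) by auto
  hence ins: "insert (\<sigma> s1, \<sigma> s1) (act \<sigma> (Id_on D)) \<in> es_sym A"
    using sym_Id_on[OF A_essp conf_image[OF sym_conf_Domain[OF S_essp \<theta>1(1)]]] by simp
  have "(\<sigma> s1, \<sigma> s1) \<notin> act \<sigma> (Id_on D)" unfolding act_Id_on using new by blast
  hence uniq: "\<exists>!p. insert p (Id_on D) \<in> es_sym S \<and> \<sigma> (fst p) = \<sigma> s1 \<and> \<sigma> (snd p) = \<sigma> s1"
    using strong_receptiveD[OF sr sym_Id_on[OF S_essp D] _ ins neg neg] by blast
  have "Id_on (insert s1 D) \<in> es_sym S" "Id_on (insert s2 D) \<in> es_sym S"
    using sym_Id_on[OF S_essp sym_conf_Domain[OF S_essp \<theta>1(1)]]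
      sym_Id_on[OF S_essp sym_conf_Domain[OF S_essp \<theta>2(1)]] \<theta>1(2) \<theta>2(2) by simp_all
  hence "insert (s1, s1) (Id_on D) \<in> es_sym S" "insert (s2, s2) (Id_on D) \<in> es_sym S"
    by (simp_all add: Id_on_def)
  thus ?thesis using uniq eq by auto
qed

lemma sr_square_extension_exists:
  assumes sr: "strong_receptive S A \<sigma>" and v: "sym_square S \<theta> \<phi> \<psi>"
    and vA: "sym_square A (insert (a, b) (act \<sigma> \<theta>)) (insert (a, a') (act \<sigma> \<phi>)) (insert (b, b') (act \<sigma> \<psi>))"
    and a: "a \<notin> Domain (act \<sigma> \<theta>)" and b: "b \<notin> Range (act \<sigma> \<theta>)"
    and neg: "\<not> es_pol A a" "\<not> es_pol A b" "\<not> es_pol A a'" "\<not> es_pol A b'"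
  obtains s t x' y' where "sym_square S (insert (s, t) \<theta>) (insert (s, x') \<phi>) (insert (t, y') \<psi>)"
    "\<sigma> s = a" "\<sigma> t = b" "\<sigma> x' = a'" "\<sigma> y' = b'"
proof -
  note vd = sym_squareD[OF v] and vAd = sym_squareD[OF vA]
  have a': "a \<notin> \<sigma> ` Domain \<theta>" and b': "b \<notin> \<sigma> ` Range \<theta>" using a b unfolding Domain_act Range_act .
  have "(a, b) \<notin> act \<sigma> \<theta>" using a by blast
  then obtain s t where st: "insert (s, t) \<theta> \<in> es_sym S" "\<sigma> s = a" "\<sigma> t = b"
    using strong_receptiveD[OF sr vd(1) _ vAd(1) neg(1,2)] by (metis prod.collapse)
  have "(a, a') \<notin> act \<sigma> \<phi>" using a' vd(4) unfolding act_mem by blast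
  then obtain x x' where xx: "insert (x, x') \<phi> \<in> es_sym S" "\<sigma> x = a" "\<sigma> x' = a'"
    using strong_receptiveD[OF sr vd(2) _ vAd(2) neg(1,3)] by (metis prod.collapse)
  have "(b, b') \<notin> act \<sigma> \<psi>" using b' vd(5) unfolding act_mem by blast
  then obtain y y' where yy: "insert (y, y') \<psi> \<in> es_sym S" "\<sigma> y = b" "\<sigma> y' = b'"
    using strong_receptiveD[OF sr vd(3) _ vAd(3) neg(2,4)] by (metis prod.collapse)
  have "x = s"
  proof -
    have "Domain (insert (s, t) \<theta>) = insert s (Domain \<theta>)" "Domain (insert (x, x') \<phi>) = insert x (Domain \<theta>)"
      using vd(4) by auto
    from strong_receptive_Domain_unique[OF sr sym_conf_Domain[OF S_essp vd(1)] st(1) this(1) xx(1) this(2)]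
    show ?thesis using st(2) xx(2) a' neg(1) by simp
  qed
  moreover have "y = t"
  proof -
    have "Domain ((insert (s, t) \<theta>)\<inverse>) = insert t (Range \<theta>)" "Domain (insert (y, y') \<psi>) = insert y (Range \<theta>)"
      using vd(5) by auto
    from strong_receptive_Domain_unique[OF sr sym_conf_Range[OF S_essp vd(1)] sym_converse[OF S_essp st(1)] this(1) yy(1) this(2)]
    show ?thesis using st(3) yy(2) b' neg(2) by simp
  qed
  ultimately have "sym_square S (insert (s, t) \<theta>) (insert (s, x') \<phi>) (insert (t, y') \<psi>)"
    unfolding sym_square_def using st(1) xx(1) yy(1) vd by simp
  thus ?thesis using that st xx yy by blast
qed

lemma sr_square_extension_unique:
  assumes sr: "strong_receptive S A \<sigma>" and v: "sym_square S \<theta> \<phi> \<psi>"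
    and e1: "sym_square S (insert (s1, t1) \<theta>) (insert (s1, x1) \<phi>) (insert (t1, y1) \<psi>)"
    and e2: "sym_square S (insert (s2, t2) \<theta>) (insert (s2, x2) \<phi>) (insert (t2, y2) \<psi>)"
    and eq: "\<sigma> s1 = \<sigma> s2" "\<sigma> t1 = \<sigma> t2" "\<sigma> x1 = \<sigma> x2" "\<sigma> y1 = \<sigma> y2"
    and new: "\<sigma> s1 \<notin> Domain (act \<sigma> \<theta>)" "\<sigma> t1 \<notin> Range (act \<sigma> \<theta>)"
    and neg: "\<not> es_pol A (\<sigma> s1)" "\<not> es_pol A (\<sigma> t1)" "\<not> es_pol A (\<sigma> x1)" "\<not> es_pol A (\<sigma> y1)"
  shows "s1 = s2 \<and> t1 = t2 \<and> x1 = x2 \<and> y1 = y2"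
proof -
  note vd = sym_squareD[OF v] and ed1 = sym_squareD[OF e1] and ed2 = sym_squareD[OF e2]
  have unique: "p1 = p2"
    if "\<chi> \<in> es_sym S" "insert p1 \<chi> \<in> es_sym S" "insert p2 \<chi> \<in> es_sym S"
      "\<sigma> (fst p1) = \<sigma> (fst p2)" "\<sigma> (snd p1) = \<sigma> (snd p2)" "(\<sigma> (fst p1), \<sigma> (snd p1)) \<notin> act \<sigma> \<chi>"
      "\<not> es_pol A (\<sigma> (fst p1))" "\<not> es_pol A (\<sigma> (snd p1))" for \<chi> p1 p2
    using strong_receptiveD[OF sr that(1,6) _ that(7,8)] act_sym[OF that(2)] that(2-5)
    by (metis act_insert prod.collapse)
  have "(\<sigma> s1, \<sigma> t1) \<notin> act \<sigma> \<theta>" "(\<sigma> s1, \<sigma> x1) \<notin> act \<sigma> \<phi>" "(\<sigma> t1, \<sigma> y1) \<notin> act \<sigma> \<psi>"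
    using new vd(4,5) unfolding Domain_act Range_act act_mem by blast+
  thus ?thesis
    using unique[OF vd(1) ed1(1) ed2(1)] unique[OF vd(2) ed1(2) ed2(2)] unique[OF vd(3) ed1(3) ed2(3)] eq neg
    by simp
qed

lemma strong_receptive_tilde:
  assumes sr: "strong_receptive S A \<sigma>"
  shows "strong_receptive (tilde S) (tilde A) (tmap A \<sigma>)"
  unfolding strong_receptive_def
proof (intro ballI allI impI, elim conjE)
  fix \<Theta> E1 E2
  assume T: "\<Theta> \<in> es_sym (tilde S)" and nin: "(E1, E2) \<notin> act (tmap A \<sigma>) \<Theta>"
    and ins: "insert (E1, E2) (act (tmap A \<sigma>) \<Theta>) \<in> es_sym (tilde A)"
    and n1: "\<not> es_pol (tilde A) E1" and n2: "\<not> es_pol (tilde A) E2"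
  obtain \<theta> \<phi> \<psi> where v: "sym_square S \<theta> \<phi> \<psi>" and P: "\<Theta> = square_iso S \<theta> \<phi> \<psi>"
    using hsymE[OF S_essp T] by metis
  have Ts: "act (tmap A \<sigma>) \<Theta> = square_iso A (act \<sigma> \<theta>) (act \<sigma> \<phi>) (act \<sigma> \<psi>)"
    unfolding P by (rule act_square_iso[OF v])
  obtain a b a' b' where vA: "sym_square A (insert (a, b) (act \<sigma> \<theta>)) (insert (a, a') (act \<sigma> \<phi>)) (insert (b, b') (act \<sigma> \<psi>))"
    and new: "a \<notin> Domain (act \<sigma> \<theta>)" "b \<notin> Range (act \<sigma> \<theta>)"
    and E: "E1 = ((a, b), prime_at A (insert (a, b) (act \<sigma> \<theta>)) a)"
      "E2 = ((a', b'), prime_at A (conjugate (insert (a, a') (act \<sigma> \<phi>)) (insert (a, b) (act \<sigma> \<theta>)) (insert (b, b') (act \<sigma> \<psi>))) a')"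
    by (rule tilde_sym_insert_cases[OF A_essp sym_square_act[OF v] ins[unfolded Ts] nin[unfolded Ts]])
  have neg: "\<not> es_pol A a" "\<not> es_pol A b" "\<not> es_pol A a'" "\<not> es_pol A b'"
    using n1 n2 E square_insert_pol[OF A_essp vA] by simp_all
  obtain s t x' y' where sq: "sym_square S (insert (s, t) \<theta>) (insert (s, x') \<phi>) (insert (t, y') \<psi>)"
    and \<sigma>: "\<sigma> s = a" "\<sigma> t = b" "\<sigma> x' = a'" "\<sigma> y' = b'"
    using sr_square_extension_exists[OF sr v vA new neg] by blast
  have st_new: "s \<notin> Domain \<theta>" "t \<notin> Range \<theta>" using new \<sigma> unfolding Domain_act Range_act by blast+
  define e where "e = (((s, t), prime_at S (insert (s, t) \<theta>) s),
    ((x', y'), prime_at S (conjugate (insert (s, x') \<phi>) (insert (s, t) \<theta>) (insert (t, y') \<psi>)) x'))"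
  have "tmap A \<sigma> (fst e) = E1" "tmap A \<sigma> (snd e) = E2"
    using tmap_square_iso_pair[OF sq, of s t x' y'] E \<sigma> unfolding e_def by (simp_all add: act_insert)
  moreover have "insert e \<Theta> \<in> es_sym (tilde S)"
    using square_iso_hsym[OF S_essp sq] square_iso_insert[OF S_essp v sq st_new] unfolding P e_def by simp
  moreover have "q = e" if q: "insert q \<Theta> \<in> es_sym (tilde S)" "tmap A \<sigma> (fst q) = E1" "tmap A \<sigma> (snd q) = E2" for q
  proof -
    have "q \<notin> \<Theta>"
    proof
      assume "q \<in> \<Theta>"
      hence "(tmap A \<sigma> (fst q), tmap A \<sigma> (snd q)) \<in> act (tmap A \<sigma>) \<Theta>"
        unfolding act_def by (metis map_prod_simp prod.collapse rev_image_eqI)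
      thus False using q nin by simp
    qed
    then obtain u w u' w' where v2: "sym_square S (insert (u, w) \<theta>) (insert (u, u') \<phi>) (insert (w, w') \<psi>)"
      and qe: "fst q = ((u, w), prime_at S (insert (u, w) \<theta>) u)"
        "snd q = ((u', w'), prime_at S (conjugate (insert (u, u') \<phi>) (insert (u, w) \<theta>) (insert (w, w') \<psi>)) u')"
      using tilde_sym_insert_cases[OF S_essp v, of "fst q" "snd q"] q(1) unfolding P by (metis prod.collapse)
    have "\<sigma> u = a" "\<sigma> w = b" "\<sigma> u' = a'" "\<sigma> w' = b'"
      using tmap_square_iso_pair[OF v2, of u w u' w'] q(2,3) qe E by simp_all
    hence "u = s \<and> w = t \<and> u' = x' \<and> w' = y'"
      using sr_square_extension_unique[OF sr v sq v2] \<sigma> new neg by simp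
    thus "q = e" using qe unfolding e_def by (simp add: prod_eq_iff)
  qed
  ultimately show "\<exists>!p. insert p \<Theta> \<in> es_sym (tilde S) \<and> tmap A \<sigma> (fst p) = E1 \<and> tmap A \<sigma> (snd p) = E2"
    by blast
qed

end

theorem mainTheorem5:
  fixes S :: "'a essp" and A :: "'b essp" and \<sigma> :: "'a \<Rightarrow> 'b"
  assumes "tstrategy S A \<sigma>"
  shows "tstrategy (tilde S) (tilde A) (tmap A \<sigma>)"
proof -
  have m: "essp_map S A \<sigma>" and c: "courteous S A \<sigma>" and sr: "strong_receptive S A \<sigma>" and th: "thin S"
    using assms unfolding tstrategy_def by auto
  interpret essp_morphism S A \<sigma> using m by unfold_locales
  show ?thesis unfolding tstrategy_def
    using tmap_essp_map courteous_tilde[OF c] strong_receptive_tilde[OF sr] thin_tilde[OF S_essp th] by blast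
qed

end
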